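(* Let $n\ge 2$. Then: (i) for all $\alpha\in\dot\Delta$, $r_\alpha(\mathcal S_n)\subset\mathcal S_n\cup\dot{\mathcal S}'_{n-1}$; (ii) for all $\alpha\in\dot\Delta$, $r_\alpha(\mathcal S_n\setminus\dot{\mathcal S}_n)\subset\mathcal S_n$, and for each $x\in\mathcal S_n\setminus\dot{\mathcal S}_n$ there exists $\alpha\in\dot\Delta$ with $r_\alpha(x)\in\dot{\mathcal S}_n$; (iii) for each $x\in\dot{\mathcal S}_n$ there are exactly three distinct reflections $r_\alpha$ with $\alpha\in\dot\Delta$ such that $r_\alpha(x)\in\dot{\mathcal S}'_{n-1}$. (The analogous statements with $\Delta,\mathcal S,\dot{\mathcal S}$ and $\Delta',\mathcal S',\dot{\mathcal S}'$ interchanged also hold.)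
   Context: Let $\tau=(1+\sqrt5)/2$, $\tau'=(1-\sqrt5)/2$. Let $\Delta\subset\mathbb{R}^4$ be the set of 120 vectors consisting of: the 8 vectors obtained from $(\pm1,0,0,0)$ by permuting coordinates; the 16 vectors $\frac12(\pm1,\pm1,\pm1,\pm1)$; and the 96 vectors obtained from $\frac12(0,\pm1,\pm\tau',\pm\tau)$ (all sign choices) by even permutations of the coordinates. Let $\Delta'$ be the image of $\Delta$ under the Galois conjugation $\tau\leftrightarrow\tau'$ applied to each coordinate. Put $K=\Delta\cap\Delta'$, $\dot\Delta=\Delta\setminus K$, $\dot\Delta'=\Delta'\setminus K$. For a unit vector $a$, $r_a(x)=x-2(x\cdot a)a$. Let $\mathbb F_4=\mathbb{Z}[\tau]/2\mathbb{Z}[\tau]$ and for $y\in\mathbb{Z}[\tau]^4$ let $\bar y\in\mathbb F_4^4$ be its coordinatewise reduction. Let $A\subset\mathbb F_4^4$ be the $\mathbb F_4$-span of $(\bar1,\bar1,\bar1,\bar1)$ and $(\bar0,\bar1,\bar{\tau'},\bar\tau)$, $A'$ the span of $(\bar1,\bar1,\bar1,\bar1)$ and $(\bar0,\bar1,\bar\tau,\bar{\tau'})$, $\mathring A=A\setminus\{0\}$, $\mathring A'=A'\setminus\{0\}$. Let $\dot A$ be the 12 vectors obtained from $(\bar0,\bar1,\bar{\tau'},\bar\tau)$ by even permutations of coordinates and $\dot A'$ those obtained by odd permutations. For $n\ge1$: $\mathcal S_n=\{x\in2^{-n}\mathbb{Z}[\tau]^4: x\cdot x=1,\ \overline{2^nx}\in\mathring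 A\}$, $\dot{\mathcal S}_n=\{x\in2^{-n}\mathbb{Z}[\tau]^4: x\cdot x=1,\ \overline{2^nx}\in\dot A\}$, and $\mathcal S'_n,\dot{\mathcal S}'_n$ likewise with $\mathring A',\dot A'$. *)

theory Defs
  imports "HOL-Analysis.Analysis" "HOL-Combinatorics.Permutations"
begin

definition tau :: real where "tau = (1 + sqrt 5) / 2"
definition tau' :: real where "tau' = (1 - sqrt 5) / 2"

definition ZT :: "real set" where
  "ZT = {of_int a + of_int b * tau | a b. True}"

definition permv :: "(4 \<Rightarrow> 4) \<Rightarrow> real^4 \<Rightarrow> real^4" where
  "permv p v = (\<chi> j. v $ p j)"

definition evenperms :: "(4 \<Rightarrow> 4) set" where
  "evenperms = {p. p permutes UNIV \<and> evenperm p}"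
definition oddperms :: "(4 \<Rightarrow> 4) set" where
  "oddperms = {p. p permutes UNIV \<and> \<not> evenperm p}"

definition DeltaP :: "real \<Rightarrow> real \<Rightarrow> (real^4) set" where
  "DeltaP t t' =
     {v. \<exists>i s. (s = 1 \<or> s = -1) \<and> v = (\<chi> j. if j = i then s else 0)}
   \<union> {v. \<forall>j. v $ j = 1/2 \<or> v $ j = -1/2}
   \<union> {permv p ((1/2) *\<^sub>R vector [0, s1, s2 * t', s3 * t]) | p s1 s2 s3.
        p \<in> evenperms \<and> s1 \<in> {1, -1} \<and> s2 \<in> {1, -1} \<and> s3 \<in> {1, -1}}"

definition Delta :: "(real^4) set" where "Delta = DeltaP tau tau'"
definition Delta' :: "(real^4) set" where "Delta' = DeltaP tau' tau"
definition Kset :: "(real^4) set" where "Kset = Delta \<inter> Delta'"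
definition Deltadot :: "(real^4) set" where "Deltadot = Delta - Kset"
definition Deltadot' :: "(real^4) set" where "Deltadot' = Delta' - Kset"

definition reflect :: "real^4 \<Rightarrow> real^4 \<Rightarrow> real^4" where
  "reflect a x = x - (2 * (x \<bullet> a)) *\<^sub>R a"

text \<open>Congruence modulo 2 Z[tau], coordinatewise: the reductions in F_4^4 agree.\<close>
definition cong2 :: "real^4 \<Rightarrow> real^4 \<Rightarrow> bool" where
  "cong2 y z \<longleftrightarrow> (\<forall>i. (y $ i - z $ i) / 2 \<in> ZT)"

text \<open>Representatives in Z[tau] of the four elements of F_4 = Z[tau]/2Z[tau].\<close>
definition F4reps :: "real set" where "F4reps = {0, 1, tau, tau'}"

definition one4 :: "real^4" where "one4 = vector [1, 1, 1, 1]"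

text \<open>Representatives (in Z[tau]^4) of the F_4-span of the reductions of u and w.\<close>
definition spanrep :: "real^4 \<Rightarrow> real^4 \<Rightarrow> (real^4) set" where
  "spanrep u w = {c *\<^sub>R u + d *\<^sub>R w | c d. c \<in> F4reps \<and> d \<in> F4reps}"

definition Arep :: "(real^4) set" where
  "Arep = spanrep one4 (vector [0, 1, tau', tau])"
definition Arep' :: "(real^4) set" where
  "Arep' = spanrep one4 (vector [0, 1, tau, tau'])"
definition Adotrep :: "(real^4) set" where
  "Adotrep = {permv p (vector [0, 1, tau', tau]) | p. p \<in> evenperms}"
definition Adotrep' :: "(real^4) set" where
  "Adotrep' = {permv p (vector [0, 1, tau', tau]) | p. p \<in> oddperms}"

definition red_in_nonzero :: "real^4 \<Rightarrow> (real^4) set \<Rightarrow> bool" where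
  "red_in_nonzero y R \<longleftrightarrow> (\<exists>v\<in>R. cong2 y v \<and> \<not> cong2 v 0)"
definition red_in :: "real^4 \<Rightarrow> (real^4) set \<Rightarrow> bool" where
  "red_in y R \<longleftrightarrow> (\<exists>v\<in>R. cong2 y v)"

definition unitlat :: "nat \<Rightarrow> real^4 \<Rightarrow> bool" where
  "unitlat n x \<longleftrightarrow> (\<forall>i. 2 ^ n * x $ i \<in> ZT) \<and> x \<bullet> x = 1"

definition S :: "nat \<Rightarrow> (real^4) set" where
  "S n = {x. unitlat n x \<and> red_in_nonzero ((2 ^ n) *\<^sub>R x) Arep}"
definition S' :: "nat \<Rightarrow> (real^4) set" where
  "S' n = {x. unitlat n x \<and> red_in_nonzero ((2 ^ n) *\<^sub>R x) Arep'}"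
definition Sdot :: "nat \<Rightarrow> (real^4) set" where
  "Sdot n = {x. unitlat n x \<and> red_in ((2 ^ n) *\<^sub>R x) Adotrep}"
definition Sdot' :: "nat \<Rightarrow> (real^4) set" where
  "Sdot' n = {x. unitlat n x \<and> red_in ((2 ^ n) *\<^sub>R x) Adotrep'}"

end

(*
  Put y = 2^n x, a vector of Z[\<tau>]^4, and reduce it modulo 2 into F4^4, where F4 = Z[\<tau>]/2.
  Every root of Deltadot is a/2 with a a signed even permutation of (0, 1, \<tau>', \<tau>); these a reduce
  onto Adot, which is orthogonal to A. Hence c = (y.a)/2 lies in Z[\<tau>], and 2^n r(x) = y - c a stays
  in Z[\<tau>]^4 with residue ybar + cbar abar in A. If that residue is zero we may halve once more:
  w = 2^(n-1) r(x) has norm 4^(n-1), vectors whose norm is divisible by 4 reduce into A \<union> A', and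
  wbar cannot lie in A, since then reflecting back would make ybar = 0; so wbar lies in A' - A = Adot'.
  Parts (ii) and (iii) reduce to computations in F4^4: ybar + cbar abar vanishes only if ybar is in
  Adot and abar is one of its three nonzero multiples, and each multiple is the residue of exactly
  one root up to sign. Both halves of the theorem are the case t = \<tau>, resp. t = \<tau>', of one
  argument.
*)

theory Submission
  imports Defs
begin

section \<open>The field with four elements\<close>

text \<open>\<open>Fw\<close> and \<open>Fw'\<close> are the residues of \<open>\<tau>\<close> and \<open>\<tau>' = 1 - \<tau>\<close> modulo \<open>2 Z[\<tau>]\<close>.\<close>

datatype f4 = F0 | F1 | Fw | Fw'

instantiation f4 :: field
begin

definition zero_f4 :: f4 where "0 = F0"
definition one_f4 :: f4 where "1 = F1"

fun plus_f4 :: "f4 \<Rightarrow> f4 \<Rightarrow> f4" where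
  "plus_f4 F0 x = x"
| "plus_f4 x F0 = x"
| "plus_f4 F1 F1 = F0" | "plus_f4 F1 Fw = Fw'" | "plus_f4 F1 Fw' = Fw"
| "plus_f4 Fw F1 = Fw'" | "plus_f4 Fw Fw = F0" | "plus_f4 Fw Fw' = F1"
| "plus_f4 Fw' F1 = Fw" | "plus_f4 Fw' Fw = F1" | "plus_f4 Fw' Fw' = F0"

fun times_f4 :: "f4 \<Rightarrow> f4 \<Rightarrow> f4" where
  "times_f4 F0 x = F0"
| "times_f4 x F0 = F0"
| "times_f4 F1 x = x"
| "times_f4 x F1 = x"
| "times_f4 Fw Fw = Fw'" | "times_f4 Fw Fw' = F1"
| "times_f4 Fw' Fw = F1" | "times_f4 Fw' Fw' = Fw"

definition uminus_f4 :: "f4 \<Rightarrow> f4" where "uminus_f4 x = x"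
definition minus_f4 :: "f4 \<Rightarrow> f4 \<Rightarrow> f4" where "minus_f4 x y = x + y"

fun inverse_f4 :: "f4 \<Rightarrow> f4" where
  "inverse_f4 F0 = F0" | "inverse_f4 F1 = F1" | "inverse_f4 Fw = Fw'" | "inverse_f4 Fw' = Fw"

definition divide_f4 :: "f4 \<Rightarrow> f4 \<Rightarrow> f4" where "divide_f4 x y = x * inverse y"

instance proof
  fix a b c :: f4
  show "a + b + c = a + (b + c)" "a * b * c = a * (b * c)" "(a + b) * c = a * c + b * c"
    by (cases a; cases b; cases c; simp)+
  show "a + b = b + a" "a * b = b * a" by (cases a; cases b; simp)+
  show "0 + a = a" "1 * a = a" "- a + a = 0" "a - b = a + - b"
    by (cases a; simp add: zero_f4_def one_f4_def uminus_f4_def minus_f4_def)+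
  show "(0::f4) \<noteq> 1" "inverse (0::f4) = 0" by (simp_all add: zero_f4_def one_f4_def)
  show "a \<noteq> 0 \<Longrightarrow> inverse a * a = 1" by (cases a) (simp_all add: zero_f4_def one_f4_def)
  show "divide a b = a * inverse b" by (simp add: divide_f4_def)
qed

end

declare zero_f4_def [simp] one_f4_def [simp]

lemma all_f4: "(\<forall>x. P x) \<longleftrightarrow> P F0 \<and> P F1 \<and> P Fw \<and> P Fw'"
  by (metis f4.exhaust)
lemma ex_f4: "(\<exists>x. P x) \<longleftrightarrow> P F0 \<or> P F1 \<or> P Fw \<or> P Fw'"
  by (metis f4.exhaust)

lemma f4_mult_F1: "x * F1 = x"
  by (cases x) simp_all

lemma f4_add_self [simp]: "x + x = (0::f4)"
  by (cases x) simp_all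

lemma f4_two [simp]: "(2::f4) = 0"
  by (metis one_add_one f4_add_self)

lemma f4_add_eq_0_iff [simp]: "x + y = F0 \<longleftrightarrow> x = y"
  by (cases x; cases y) simp_all

lemma of_int_f4: "(of_int k :: f4) = (if even k then 0 else 1)"
proof -
  have "(of_int (2 * (k div 2)) :: f4) = 0" by simp
  moreover have "k = 2 * (k div 2) + k mod 2" by simp
  ultimately have "(of_int k :: f4) = of_int (k mod 2)" by (metis add_0 of_int_add)
  then show ?thesis by (auto simp: odd_iff_mod_2_eq_one even_iff_mod_2_eq_zero)
qed

lemma f4_uminus [simp]: "- x = (x::f4)"
  by (simp add: uminus_f4_def)

lemma f4_minus [simp]: "x - y = x + (y::f4)"
  by (simp add: minus_f4_def)

lemma f4_coeffs_mult:
  "(x + y * Fw) * (z + w * Fw) = (x * z + y * w) + (x * w + y * z + y * w) * Fw"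
  by (cases x; cases y; cases z; cases w) simp_all

lemma f4_sign_flip_cancel:
  "l \<noteq> 0 \<Longrightarrow> e1 \<in> {0, 1} \<Longrightarrow> e2 \<in> {0, 1} \<Longrightarrow> e3 \<in> {0, 1} \<Longrightarrow>
    l * e1 + (l * Fw') * (Fw' * e2) + (l * Fw) * (Fw * e3) = 0 \<Longrightarrow> e1 = e2 \<and> e2 = e3"
  by (cases l; cases e1; cases e2; cases e3) simp_all

text \<open>The summands are the changes of residue caused by flipping one sign of a root
  (see \<open>g_signed_exists\<close>); since they are \<open>0, l, l\<cdot>Fw, l\<cdot>Fw'\<close>, the translates cover \<open>F4\<close>.\<close>

lemma f4_translate_cover:
  "l \<noteq> 0 \<Longrightarrow> c = l \<or> c + l = l \<or> c + Fw' * (l * Fw') = l \<or> c + Fw * (l * Fw) = l"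
  by (cases l; cases c) simp_all

type_synonym f4vec = "f4 \<times> f4 \<times> f4 \<times> f4"

fun smult4 :: "f4 \<Rightarrow> f4vec \<Rightarrow> f4vec" where
  "smult4 c (a, b, d, e) = (c * a, c * b, c * d, c * e)"

fun dot4 :: "f4vec \<Rightarrow> f4vec \<Rightarrow> f4" where
  "dot4 (a, b, c, d) (e, f, g, h) = a * e + b * f + c * g + d * h"

lemma zero_f4vec: "(0::f4vec) = (F0, F0, F0, F0)"
  by (simp add: zero_prod_def)

fun nth4 :: "f4vec \<Rightarrow> 4 \<Rightarrow> f4" where
  "nth4 (a, b, c, d) i = (if i = 1 then a else if i = 2 then b else if i = 3 then c else d)"

definition permute4 :: "(4 \<Rightarrow> 4) \<Rightarrow> f4vec \<Rightarrow> f4vec" where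
  "permute4 p f = (nth4 f (p 1), nth4 f (p 2), nth4 f (p 3), nth4 f (p 4))"

definition ones4 :: f4vec where "ones4 = (F1, F1, F1, F1)"
definition gbar :: f4vec where "gbar = (F0, F1, Fw', Fw)"
definition gbar' :: f4vec where "gbar' = (F0, F1, Fw, Fw')"

definition Abar :: "f4vec set" where "Abar = {smult4 c ones4 + smult4 d gbar | c d. True}"
definition Abar' :: "f4vec set" where "Abar' = {smult4 c ones4 + smult4 d gbar' | c d. True}"
definition Adotbar :: "f4vec set" where "Adotbar = {permute4 p gbar | p. p \<in> evenperms}"
definition Adotbar' :: "f4vec set" where "Adotbar' = {permute4 p gbar | p. p \<in> oddperms}"

lemma Abar_eq: "Abar = {(F0,F0,F0,F0), (F0,F1,Fw',Fw), (F0,Fw,F1,Fw'), (F0,Fw',Fw,F1),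
  (F1,F0,Fw,Fw'), (F1,F1,F1,F1), (F1,Fw,Fw',F0), (F1,Fw',F0,Fw), (Fw,F0,Fw',F1), (Fw,F1,F0,Fw'),
  (Fw,Fw,Fw,Fw), (Fw,Fw',F1,F0), (Fw',F0,F1,Fw), (Fw',F1,Fw,F0), (Fw',Fw,F0,F1), (Fw',Fw',Fw',Fw')}"
  unfolding Abar_def ones4_def gbar_def by (auto simp: ex_f4)

lemma Abar'_eq: "Abar' = {(F0,F0,F0,F0), (F0,F1,Fw,Fw'), (F0,Fw,Fw',F1), (F0,Fw',F1,Fw),
  (F1,F0,Fw',Fw), (F1,F1,F1,F1), (F1,Fw,F0,Fw'), (F1,Fw',Fw,F0), (Fw,F0,F1,Fw'), (Fw,F1,Fw',F0),
  (Fw,Fw,Fw,Fw), (Fw,Fw',F0,F1), (Fw',F0,Fw,F1), (Fw',F1,F0,Fw), (Fw',Fw,F1,F0), (Fw',Fw',Fw',Fw')}"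
  unfolding Abar'_def ones4_def gbar'_def by (auto simp: ex_f4)

lemma nth4_gbar_inj: "nth4 gbar i = nth4 gbar j \<Longrightarrow> i = j"
  using exhaust_4[of i] exhaust_4[of j] by (auto simp: gbar_def)

lemma permute4_gbar_inj: "permute4 p gbar = permute4 q gbar \<Longrightarrow> p = q"
proof
  fix j assume "permute4 p gbar = permute4 q gbar"
  then have "nth4 gbar (p i) = nth4 gbar (q i)" for i
    using exhaust_4[of i] by (auto simp: permute4_def)
  then show "p j = q j" using nth4_gbar_inj by blast
qed

lemma nth4_permute4 [simp]: "nth4 (permute4 p f) i = nth4 f (p i)"
  using exhaust_4[of i] by (cases f) (auto simp: permute4_def)

lemma permute4_permute4: "permute4 p (permute4 q f) = permute4 (q \<circ> p) f"
  unfolding permute4_def[of p] nth4_permute4 by (simp add: permute4_def)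

lemma f4vec_add_eq_0_iff: "x + y = 0 \<longleftrightarrow> x = (y::f4vec)"
  by (cases x; cases y) (simp add: zero_f4vec)

lemma nth4_smult4 [simp]: "nth4 (smult4 c f) i = c * nth4 f i"
  by (cases f) simp

lemma smult4_permute4: "smult4 c (permute4 p f) = permute4 p (smult4 c f)"
  by (simp add: permute4_def)

lemma smult4_smult4: "smult4 c (smult4 d f) = smult4 (c * d) f"
  by (cases f) (simp add: mult.assoc)

lemma smult4_1: "smult4 1 f = f"
  by (cases f) simp

lemma permute4_id: "permute4 id f = f"
  using exhaust_4 by (cases f) (simp add: permute4_def)

lemma f4vec_eq_0_iff: "f = 0 \<longleftrightarrow> (\<forall>i. nth4 f i = 0)"
  by (cases f) (simp add: forall_4 zero_f4vec)

lemma permute4_eq_0_iff: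
  assumes "p permutes UNIV"
  shows "permute4 p f = 0 \<longleftrightarrow> f = 0"
  unfolding f4vec_eq_0_iff nth4_permute4 by (metis assms permutes_inverses(1))

lemma distinct_f4vec_cases: "distinct [a, b, c, d] \<Longrightarrow> (a, b, c, d) \<in>
  {(F0,F1,Fw',Fw), (F0,Fw',Fw,F1), (F0,Fw,F1,Fw'), (F1,F0,Fw,Fw'), (F1,Fw',F0,Fw), (F1,Fw,Fw',F0),
   (Fw',F0,F1,Fw), (Fw',F1,Fw,F0), (Fw',Fw,F0,F1), (Fw,F0,Fw',F1), (Fw,F1,F0,Fw'), (Fw,Fw',F1,F0)} \<union>
  {(F0,F1,Fw,Fw'), (F0,Fw',F1,Fw), (F0,Fw,Fw',F1), (F1,F0,Fw',Fw), (F1,Fw',Fw,F0), (F1,Fw,F0,Fw'),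
   (Fw',F0,Fw,F1), (Fw',F1,F0,Fw), (Fw',Fw,F1,F0), (Fw,F0,F1,Fw'), (Fw,F1,Fw',F0), (Fw,Fw',F0,F1)}"
  by (cases a; cases b; cases c; cases d) simp_all

abbreviation tr :: "4 \<Rightarrow> 4 \<Rightarrow> 4 \<Rightarrow> 4" where "tr \<equiv> Transposition.transpose"

lemma gbar'_eq: "gbar' = permute4 (tr 3 4) gbar"
  by (simp add: gbar_def gbar'_def permute4_def Transposition.transpose_def)

text \<open>A permutation is determined by how it rearranges the four distinct entries of \<open>gbar\<close>,
  which makes the enumeration below decidable.\<close>

lemma permutations_4:
  assumes "p permutes UNIV"
  shows "p \<in> {id, tr 2 3 \<circ> tr 3 4, tr 2 4 \<circ> tr 3 4, tr 1 2 \<circ> tr 3 4, tr 1 2 \<circ> tr 2 3,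
      tr 1 2 \<circ> tr 2 4, tr 1 3 \<circ> tr 2 3, tr 1 3 \<circ> tr 3 4, tr 1 3 \<circ> tr 2 4, tr 1 4 \<circ> tr 2 4,
      tr 1 4 \<circ> tr 3 4, tr 1 4 \<circ> tr 2 3}
    \<or> p \<in> {tr 3 4, tr 2 3, tr 2 4, tr 1 2, tr 1 2 \<circ> tr 2 3 \<circ> tr 3 4, tr 1 2 \<circ> tr 2 4 \<circ> tr 3 4,
      tr 1 3 \<circ> tr 2 3 \<circ> tr 3 4, tr 1 3, tr 1 3 \<circ> tr 2 4 \<circ> tr 3 4, tr 1 4 \<circ> tr 2 4 \<circ> tr 3 4,
      tr 1 4, tr 1 4 \<circ> tr 2 3 \<circ> tr 3 4}"
    (is "p \<in> ?E \<or> p \<in> ?O")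
proof -
  have "nth4 gbar (p i) \<noteq> nth4 gbar (p j)" if "i \<noteq> j" for i j
    using permutes_inj[OF assms] nth4_gbar_inj that by (metis injD)
  then have "distinct [nth4 gbar (p 1), nth4 gbar (p 2), nth4 gbar (p 3), nth4 gbar (p 4)]"
    by simp
  then have "permute4 p gbar \<in> (\<lambda>w. permute4 w gbar) ` (?E \<union> ?O)"
    using distinct_f4vec_cases unfolding permute4_def
    by (simp add: gbar_def Transposition.transpose_def)
  then show ?thesis using permute4_gbar_inj by blast
qed

lemma evenperms_4: "evenperms = {id, tr 2 3 \<circ> tr 3 4, tr 2 4 \<circ> tr 3 4, tr 1 2 \<circ> tr 3 4, tr 1 2 \<circ> tr 2 3,
      tr 1 2 \<circ> tr 2 4, tr 1 3 \<circ> tr 2 3, tr 1 3 \<circ> tr 3 4, tr 1 3 \<circ> tr 2 4, tr 1 4 \<circ> tr 2 4,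
      tr 1 4 \<circ> tr 3 4, tr 1 4 \<circ> tr 2 3}" (is "_ = ?E")
  and oddperms_4: "oddperms = {tr 3 4, tr 2 3, tr 2 4, tr 1 2, tr 1 2 \<circ> tr 2 3 \<circ> tr 3 4,
      tr 1 2 \<circ> tr 2 4 \<circ> tr 3 4, tr 1 3 \<circ> tr 2 3 \<circ> tr 3 4, tr 1 3, tr 1 3 \<circ> tr 2 4 \<circ> tr 3 4,
      tr 1 4 \<circ> tr 2 4 \<circ> tr 3 4, tr 1 4, tr 1 4 \<circ> tr 2 3 \<circ> tr 3 4}" (is "_ = ?O")
proof -
  have "\<forall>p\<in>?E. p permutes UNIV \<and> evenperm p" "\<forall>p\<in>?O. p permutes UNIV \<and> \<not> evenperm p"
    by (simp_all add: permutes_compose permutes_swap_id evenperm_comp permutation_compose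
        permutation_swap_id evenperm_swap)
  then show "evenperms = ?E" "oddperms = ?O"
    unfolding evenperms_def oddperms_def using permutations_4 by blast+
qed

lemma transpose_comp_evenperms:
  assumes "a \<noteq> b"
  shows "(\<circ>) (tr a b) ` evenperms = oddperms" "(\<circ>) (tr a b) ` oddperms = evenperms"
proof -
  have \<sigma>: "tr a b permutes UNIV" "\<not> evenperm (tr a b)" "tr a b \<circ> tr a b = id"
    using assms by (simp_all add: permutes_swap_id evenperm_swap)
  have comp: "tr a b \<circ> p permutes UNIV \<and> (evenperm (tr a b \<circ> p) \<longleftrightarrow> \<not> evenperm p)"
    if "p permutes UNIV" for p
    using that \<sigma> permutes_compose evenperm_comp permutation_permutes
    by (metis finite_class.finite_UNIV)
  have invol: "q = tr a b \<circ> (tr a b \<circ> q)" for q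
    using \<sigma>(3) by (simp add: comp_assoc[symmetric])
  show "(\<circ>) (tr a b) ` evenperms = oddperms" "(\<circ>) (tr a b) ` oddperms = evenperms"
    unfolding evenperms_def oddperms_def using comp invol by (auto intro: image_eqI)
qed

lemma Adotbar_eq: "Adotbar = {(F0,F1,Fw',Fw), (F0,Fw',Fw,F1), (F0,Fw,F1,Fw'), (F1,F0,Fw,Fw'),
  (F1,Fw',F0,Fw), (F1,Fw,Fw',F0), (Fw',F0,F1,Fw), (Fw',F1,Fw,F0), (Fw',Fw,F0,F1), (Fw,F0,Fw',F1),
  (Fw,F1,F0,Fw'), (Fw,Fw',F1,F0)}"
  unfolding Adotbar_def evenperms_4 Setcompr_eq_image
  by (simp add: permute4_def gbar_def Transposition.transpose_def insert_commute)

lemma Adotbar'_eq: "Adotbar' = {(F0,F1,Fw,Fw'), (F0,Fw',F1,Fw), (F0,Fw,Fw',F1), (F1,F0,Fw',Fw),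
  (F1,Fw',Fw,F0), (F1,Fw,F0,Fw'), (Fw',F0,Fw,F1), (Fw',F1,F0,Fw), (Fw',Fw,F1,F0), (Fw,F0,F1,Fw'),
  (Fw,F1,Fw',F0), (Fw,Fw',F0,F1)}"
  unfolding Adotbar'_def oddperms_4 Setcompr_eq_image
  by (simp add: permute4_def gbar_def Transposition.transpose_def insert_commute)

lemma Adotbar_subset_Abar: "Adotbar \<subseteq> Abar"
  unfolding Adotbar_eq Abar_eq by simp

lemma zero_notin_Adotbar: "0 \<notin> Adotbar"
  and ones4_notin_Adotbar: "ones4 \<notin> Adotbar"
  and Adotbar_Int_Adotbar': "Adotbar \<inter> Adotbar' = {}"
  unfolding Adotbar_eq Adotbar'_eq by (simp_all add: zero_f4vec ones4_def)

lemma Abar'_diff_Abar: "\<forall>f\<in>Abar'. f \<notin> Abar \<longrightarrow> f \<in> Adotbar'"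
  unfolding Abar_eq Abar'_eq Adotbar'_eq by simp

lemma dot4_Abar_Adotbar: "\<forall>f\<in>Abar. \<forall>e\<in>Adotbar. dot4 f e = 0"
  unfolding Abar_eq Adotbar_eq by simp

lemma Abar_add_smult4_Adotbar: "\<forall>f\<in>Abar. \<forall>e\<in>Adotbar. \<forall>m. f + smult4 m e \<in> Abar"
  unfolding Abar_eq Adotbar_eq by (simp add: all_f4 zero_f4vec)

lemma smult4_Adotbar: "\<forall>e\<in>Adotbar. \<forall>m. m \<noteq> 0 \<longrightarrow> smult4 m e \<in> Adotbar"
  unfolding Adotbar_eq by (simp add: all_f4)

lemma smult4_Adotbar_distinct: "\<forall>e\<in>Adotbar. distinct [e, smult4 Fw e, smult4 Fw' e]"
  unfolding Adotbar_eq by simp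

lemma Adotbar_add_smult4_eq_0:
  "\<forall>e\<in>Adotbar. \<forall>f\<in>Adotbar. \<forall>m. e + smult4 m f = 0 \<longrightarrow> f \<in> {e, smult4 Fw e, smult4 Fw' e}"
  unfolding Adotbar_eq by (simp add: all_f4 zero_f4vec)

lemma Abar_add_smult4_Adotbar_nonzero:
  "\<forall>f\<in>Abar. f \<notin> Adotbar \<longrightarrow> f \<noteq> 0 \<longrightarrow> (\<forall>e\<in>Adotbar. \<forall>m. f + smult4 m e \<noteq> 0)"
  unfolding Abar_eq Adotbar_eq by (simp add: all_f4 zero_f4vec)

lemma Abar_add_smult4_gbar:
  "\<forall>f\<in>Abar. f \<notin> Adotbar \<longrightarrow> f \<noteq> 0 \<longrightarrow> (\<forall>m. m \<noteq> 0 \<longrightarrow> f + smult4 m gbar \<in> Adotbar)"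
  unfolding Abar_eq Adotbar_eq gbar_def by (simp add: all_f4 zero_f4vec)

lemma Abar_nth4_2_nonzero: "\<forall>f\<in>Abar. f \<notin> Adotbar \<longrightarrow> f \<noteq> 0 \<longrightarrow> nth4 f 2 \<noteq> 0"
  unfolding Abar_eq Adotbar_eq by (simp add: zero_f4vec)

text \<open>\<open>lift f * lift f = sq_coeff0 f + sq_coeff1 f * t\<close> for either root \<open>t\<close> of \<open>t\<^sup>2 = t + 1\<close>
  (lemma \<open>lift_sq\<close>).\<close>

fun sq_coeff0 :: "f4 \<Rightarrow> int" where
  "sq_coeff0 F0 = 0" | "sq_coeff0 F1 = 1" | "sq_coeff0 Fw = 1" | "sq_coeff0 Fw' = 2"
fun sq_coeff1 :: "f4 \<Rightarrow> int" where
  "sq_coeff1 F0 = 0" | "sq_coeff1 F1 = 0" | "sq_coeff1 Fw = 1" | "sq_coeff1 Fw' = -1"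

lemma sq_coeffs_dvd4_imp_Abar_Un_Abar':
  "4 dvd (sq_coeff0 a + sq_coeff0 b + sq_coeff0 c + sq_coeff0 d) \<Longrightarrow>
   4 dvd (sq_coeff1 a + sq_coeff1 b + sq_coeff1 c + sq_coeff1 d) \<Longrightarrow> (a, b, c, d) \<in> Abar \<union> Abar'"
  unfolding Abar_eq Abar'_eq by (cases a; cases b; cases c; cases d) simp_all

section \<open>The ring \<open>Z[\<tau>]\<close>\<close>

lemma golden_norm_eq_0:
  fixes a b :: int
  assumes "a * a + a * b - b * b = 0"
  shows "a = 0 \<and> b = 0"
  using assms
proof (induction "nat (\<bar>a\<bar> + \<bar>b\<bar>)" arbitrary: a b rule: less_induct)
  case less
  have "even a \<and> even b"
  proof (rule ccontr)
    assume "\<not> (even a \<and> even b)"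
    then have "odd (a * a + a * b - b * b)" by auto
    then show False using less.prems by simp
  qed
  then obtain a' b' where ab: "a = 2 * a'" "b = 2 * b'" by (auto elim!: evenE)
  with less.prems have "a' * a' + a' * b' - b' * b' = 0" by (simp add: algebra_simps)
  moreover have "nat (\<bar>a'\<bar> + \<bar>b'\<bar>) < nat (\<bar>a\<bar> + \<bar>b\<bar>)" if "\<not> (a = 0 \<and> b = 0)"
    using that ab by auto
  ultimately show ?case using less.hyps ab by fastforce
qed

lemma tau_sq: "tau * tau = tau + 1"
  and tau'_sq: "tau' * tau' = tau' + 1"
  and tau'_eq: "tau' = 1 - tau"
  by (simp_all add: tau_def tau'_def field_simps)

lemma ZT_coeffs_mult:
  fixes t :: real
  assumes "t * t = t + 1"
  shows "(of_int a + of_int b * t) * (of_int c + of_int d * t)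
    = of_int (a * c + b * d) + of_int (a * d + b * c + b * d) * t"
proof -
  have "(of_int a + of_int b * t) * (of_int c + of_int d * t)
      = of_int a * of_int c + (of_int a * of_int d + of_int b * of_int c) * t + of_int b * of_int d * (t * t)"
    by (simp add: algebra_simps)
  also have "\<dots> = of_int (a * c + b * d) + of_int (a * d + b * c + b * d) * t"
    unfolding assms by (simp add: algebra_simps)
  finally show ?thesis .
qed

lemma ZT_add [simp, intro]: "r \<in> ZT \<Longrightarrow> s \<in> ZT \<Longrightarrow> r + s \<in> ZT"
proof -
  assume "r \<in> ZT" "s \<in> ZT"
  then obtain a b c d where "r = of_int a + of_int b * tau" "s = of_int c + of_int d * tau"
    unfolding ZT_def by blast
  then have "r + s = of_int (a + c) + of_int (b + d) * tau" by (simp add: algebra_simps)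
  then show ?thesis unfolding ZT_def by blast
qed

lemma ZT_uminus [simp, intro]: "r \<in> ZT \<Longrightarrow> - r \<in> ZT"
proof -
  assume "r \<in> ZT"
  then obtain a b where "r = of_int a + of_int b * tau" unfolding ZT_def by blast
  then have "- r = of_int (- a) + of_int (- b) * tau" by simp
  then show ?thesis unfolding ZT_def by blast
qed

lemma ZT_diff [simp, intro]: "r \<in> ZT \<Longrightarrow> s \<in> ZT \<Longrightarrow> r - s \<in> ZT"
  using ZT_add[of r "- s"] ZT_uminus[of s] by simp

lemma ZT_mult [simp, intro]: "r \<in> ZT \<Longrightarrow> s \<in> ZT \<Longrightarrow> r * s \<in> ZT"
  unfolding ZT_def using ZT_coeffs_mult[OF tau_sq] by blast

lemma ZT_of_int [simp, intro]: "of_int k \<in> ZT"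
  unfolding ZT_def by (rule CollectI, rule exI[of _ k], rule exI[of _ 0]) simp

lemma ZT_numeral [simp, intro]: "numeral k \<in> ZT"
  and ZT_0 [simp, intro]: "0 \<in> ZT"
  and ZT_1 [simp, intro]: "1 \<in> ZT"
  using ZT_of_int[of "numeral k"] ZT_of_int[of 0] ZT_of_int[of 1] by simp_all

lemma ZT_power [simp, intro]: "r \<in> ZT \<Longrightarrow> r ^ k \<in> ZT"
  by (induction k) auto

lemma inner_4: "x \<bullet> y = x$1 * y$1 + x$2 * y$2 + x$3 * y$3 + x$4 * y$4" for x y :: "real^4"
  by (simp add: inner_vec_def sum_4)

lemma vector_4_nth [simp]:
  "(vector [a, b, c, d] :: 'a::zero^4) $ 1 = a" "(vector [a, b, c, d] :: 'a^4) $ 2 = b"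
  "(vector [a, b, c, d] :: 'a^4) $ 3 = c" "(vector [a, b, c, d] :: 'a^4) $ 4 = d"
  by (simp_all add: vector_def)

lemma permv_nth [simp]: "permv p v $ j = v $ p j"
  by (simp add: permv_def)

lemma permv_scaleR: "permv p (c *\<^sub>R v) = c *\<^sub>R permv p v"
  and permv_diff: "permv p (v - w) = permv p v - permv p w"
  and permv_uminus: "permv p (- v) = - permv p v"
  and permv_permv: "permv p (permv q v) = permv (q \<circ> p) v"
  and permv_id: "permv id v = v"
  by (simp_all add: vec_eq_iff)

lemma permv_inner:
  assumes "p permutes UNIV"
  shows "permv p v \<bullet> permv p w = v \<bullet> w"
proof -
  have "permv p v \<bullet> permv p w = (\<Sum>j\<in>UNIV. (\<lambda>i. v$i * w$i) (p j))" by (simp add: inner_vec_def)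
  also have "\<dots> = (\<Sum>i\<in>UNIV. v$i * w$i)" by (rule sum.reindex_bij_betw[OF permutes_imp_bij[OF assms]])
  finally show ?thesis by (simp add: inner_vec_def)
qed

lemma permv_inv:
  assumes "p permutes UNIV"
  shows "permv p (permv (inv p) y) = y"
  using permutes_inverses(2)[OF assms] by (simp add: vec_eq_iff)

lemma inner_permv_right: "p permutes UNIV \<Longrightarrow> y \<bullet> permv p u = permv (inv p) y \<bullet> u"
  by (metis permv_inner permv_inv)

lemma diff_scaleR_permv:
  "p permutes UNIV \<Longrightarrow> y - c *\<^sub>R permv p u = permv p (permv (inv p) y - c *\<^sub>R u)"
  by (simp add: permv_diff permv_scaleR permv_inv)

lemma reflect_scaleR: "reflect a (c *\<^sub>R x) = c *\<^sub>R reflect a x"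
  unfolding reflect_def by (simp add: algebra_simps)

lemma scaleR_reflect_half:
  "c *\<^sub>R reflect ((1/2) *\<^sub>R a) x = c *\<^sub>R x - ((c *\<^sub>R x \<bullet> a) / 2) *\<^sub>R a"
proof -
  have "reflect ((1/2) *\<^sub>R a) y = y - ((y \<bullet> a) / 2) *\<^sub>R a" for y
    unfolding reflect_def by (simp add: scaleR_scaleR)
  then show ?thesis unfolding reflect_scaleR[symmetric] .
qed

lemma reflect_uminus: "reflect (- a) = reflect a"
  unfolding reflect_def by (rule ext) simp

lemma inner_reflect_self: "a \<bullet> a = 1 \<Longrightarrow> reflect a x \<bullet> a = - (x \<bullet> a)"
  unfolding reflect_def by (simp add: inner_diff_left)

lemma reflect_reflect:
  assumes "a \<bullet> a = 1"
  shows "reflect a (reflect a x) = x"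
proof -
  have "reflect a (reflect a x) = reflect a x + (2 * (x \<bullet> a)) *\<^sub>R a"
    unfolding reflect_def[of a "reflect a x"] inner_reflect_self[OF assms] by simp
  then show ?thesis unfolding reflect_def by simp
qed

lemma inner_reflect:
  assumes "a \<bullet> a = 1"
  shows "reflect a x \<bullet> reflect a x = x \<bullet> x"
proof -
  have "reflect a x \<bullet> reflect a x = x \<bullet> x - 4 * (x \<bullet> a) * (x \<bullet> a) + 4 * (x \<bullet> a) * (x \<bullet> a) * (a \<bullet> a)"
    unfolding reflect_def by (simp add: inner_diff_left inner_diff_right inner_commute algebra_simps)
  then show ?thesis using assms by simp
qed

lemma reflect_eq_reflect_imp:
  assumes "a \<bullet> a = 1" "b \<bullet> b = 1" "reflect a = reflect b"
  shows "b = a \<or> b = - a"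
proof -
  have "reflect a a = - a" using assms(1) unfolding reflect_def by (simp add: scaleR_2)
  then have "a - (2 * (a \<bullet> b)) *\<^sub>R b = - a" unfolding assms(3) reflect_def .
  then have "a + a = (2 * (a \<bullet> b)) *\<^sub>R b" by (simp add: algebra_simps)
  then have a: "a = (a \<bullet> b) *\<^sub>R b" by (metis scaleR_2 scaleR_scaleR scaleR_left_imp_eq zero_neq_numeral)
  then have "a \<bullet> a = (a \<bullet> b) * (a \<bullet> b)"
    by (metis assms(2) inner_scaleR_left inner_scaleR_right mult.right_neutral)
  then have "a \<bullet> b = 1 \<or> a \<bullet> b = -1" using assms(1) by (metis mult_cancel_left1 square_eq_1_iff)
  then show ?thesis using a by (metis add.inverse_inverse scaleR_minus1_left scaleR_one)
qed

section \<open>Reduction modulo 2\<close>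

text \<open>Both halves of the theorem at once: \<open>t = \<tau>\<close> yields \<open>S\<close>, \<open>Sdot\<close>, \<open>Deltadot\<close> and
  \<open>t = \<tau>'\<close> yields the conjugate \<open>S'\<close>, \<open>Sdot'\<close>, \<open>Deltadot'\<close> (lemmas \<open>Tau_sets\<close>, \<open>Tau'_sets\<close>).\<close>

locale golden =
  fixes t :: real
  assumes t_cases: "t = tau \<or> t = tau'"
begin

lemma t_sq: "t * t = t + 1"
  using t_cases tau_sq tau'_sq by blast

lemma ZT_iff: "r \<in> ZT \<longleftrightarrow> (\<exists>a b. r = of_int a + of_int b * t)"
proof -
  have "(\<exists>a b. r = of_int a + of_int b * tau') \<longleftrightarrow> (\<exists>a b. r = of_int a + of_int b * tau)"
  proof
    assume "\<exists>a b. r = of_int a + of_int b * tau'"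
    then obtain a b where "r = of_int a + of_int b * tau'" by blast
    then have "r = of_int (a + b) + of_int (- b) * tau" unfolding tau'_eq by (simp add: algebra_simps)
    then show "\<exists>a b. r = of_int a + of_int b * tau" by blast
  next
    assume "\<exists>a b. r = of_int a + of_int b * tau"
    then obtain a b where "r = of_int a + of_int b * tau" by blast
    then have "r = of_int (a + b) + of_int (- b) * tau'" unfolding tau'_eq by (simp add: algebra_simps)
    then show "\<exists>a b. r = of_int a + of_int b * tau'" by blast
  qed
  then show ?thesis using t_cases unfolding ZT_def by auto
qed

lemma ZT_cases:
  assumes "r \<in> ZT"
  obtains a b where "r = of_int a + of_int b * t"
  using assms ZT_iff by blast

lemma ZT_coeffs [intro]: "of_int a + of_int b * t \<in> ZT"
  using ZT_iff by blast

lemma t_in_ZT [simp, intro]: "t \<in> ZT"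
  using ZT_coeffs[of 0 1] by simp

lemma coeffs_unique:
  assumes "of_int a + of_int b * t = of_int c + of_int d * t"
  shows "a = c \<and> b = d"
proof -
  define u v where "u = a - c" and "v = b - d"
  have u: "of_int u = - (of_int v * t)" using assms unfolding u_def v_def by (simp add: algebra_simps)
  have "of_int (u * u + u * v - v * v) = (of_int v * of_int v) * (t * t - t - 1)"
    unfolding of_int_diff of_int_add of_int_mult u by (simp add: algebra_simps)
  also have "\<dots> = 0" using t_sq by simp
  finally have "u * u + u * v - v * v = 0" by (simp only: of_int_eq_0_iff)
  then have "u = 0 \<and> v = 0" by (rule golden_norm_eq_0)
  then show ?thesis unfolding u_def v_def by simp
qed

text \<open>Meaningful only on \<open>ZT\<close>, where the coefficients are unique (\<open>coeffs_unique\<close>).\<close>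

definition red :: "real \<Rightarrow> f4" where
  "red r = (SOME f. \<exists>a b. r = of_int a + of_int b * t \<and> f = of_int a + of_int b * Fw)"

lemma red_coeffs: "red (of_int a + of_int b * t) = of_int a + of_int b * Fw"
  unfolding red_def by (rule some_equality) (auto dest: coeffs_unique)

lemma red_add: "r \<in> ZT \<Longrightarrow> s \<in> ZT \<Longrightarrow> red (r + s) = red r + red s"
proof -
  assume "r \<in> ZT" "s \<in> ZT"
  then obtain a b c d where rs: "r = of_int a + of_int b * t" "s = of_int c + of_int d * t"
    by (metis ZT_cases)
  have "r + s = of_int (a + c) + of_int (b + d) * t" unfolding rs by (simp add: algebra_simps)
  then have "red (r + s) = of_int (a + c) + of_int (b + d) * Fw" by (simp only: red_coeffs)
  then show ?thesis unfolding rs red_coeffs by (simp add: algebra_simps)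
qed

lemma red_uminus: "r \<in> ZT \<Longrightarrow> red (- r) = red r"
proof -
  assume "r \<in> ZT"
  then obtain a b where r: "r = of_int a + of_int b * t" by (metis ZT_cases)
  then have "- r = of_int (- a) + of_int (- b) * t" by simp
  then have "red (- r) = of_int (- a) + of_int (- b) * Fw" by (simp only: red_coeffs)
  then show ?thesis unfolding r red_coeffs by simp
qed

lemma red_diff: "r \<in> ZT \<Longrightarrow> s \<in> ZT \<Longrightarrow> red (r - s) = red r + red s"
  using red_add[of r "- s"] red_uminus[of s] by auto

lemma red_mult: "r \<in> ZT \<Longrightarrow> s \<in> ZT \<Longrightarrow> red (r * s) = red r * red s"
proof -
  assume "r \<in> ZT" "s \<in> ZT"
  then obtain a b c d where rs: "r = of_int a + of_int b * t" "s = of_int c + of_int d * t"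
    by (metis ZT_cases)
  show ?thesis unfolding rs ZT_coeffs_mult[OF t_sq] red_coeffs f4_coeffs_mult by simp
qed

lemma red_of_int: "red (of_int k) = (if even k then 0 else 1)"
  using red_coeffs[of k 0] by (simp add: of_int_f4)

lemma red_0 [simp]: "red 0 = 0"
  and red_1 [simp]: "red 1 = 1"
  and red_2 [simp]: "red 2 = 0"
  using red_of_int[of 0] red_of_int[of 1] red_of_int[of 2] by simp_all

lemma red_t [simp]: "red t = Fw"
  using red_coeffs[of 0 1] by simp

lemma red_1_minus_t [simp]: "red (1 - t) = Fw'"
  using red_coeffs[of 1 "- 1"] by simp

lemma one_minus_t_in_ZT [simp, intro]: "1 - t \<in> ZT"
  by auto

lemma half_in_ZT_iff: "r \<in> ZT \<Longrightarrow> r / 2 \<in> ZT \<longleftrightarrow> red r = 0"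
proof -
  assume "r \<in> ZT"
  then obtain a b where r: "r = of_int a + of_int b * t" by (metis ZT_cases)
  have "r / 2 \<in> ZT \<longleftrightarrow> even a \<and> even b"
  proof
    assume "r / 2 \<in> ZT"
    then obtain c d where "r / 2 = of_int c + of_int d * t" by (metis ZT_cases)
    then have "of_int a + of_int b * t = of_int (2 * c) + of_int (2 * d) * t"
      using r by (simp add: algebra_simps)
    then show "even a \<and> even b" using coeffs_unique by fastforce
  next
    assume "even a \<and> even b"
    then obtain c d where "a = 2 * c" "b = 2 * d" by (auto elim!: evenE)
    then have "r / 2 = of_int c + of_int d * t" using r by (simp add: algebra_simps)
    then show "r / 2 \<in> ZT" by (metis ZT_coeffs)
  qed
  then show ?thesis unfolding r red_coeffs by (simp add: of_int_f4)
qed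

lemma red_double [simp]: "r \<in> ZT \<Longrightarrow> red (2 * r) = 0"
  using half_in_ZT_iff[of "2 * r"] by auto

lemma quarter_in_ZT_imp_dvd:
  assumes "(of_int a + of_int b * t) / 4 \<in> ZT"
  shows "4 dvd a \<and> 4 dvd b"
proof -
  obtain c d where "(of_int a + of_int b * t) / 4 = of_int c + of_int d * t"
    using assms by (metis ZT_cases)
  then have "of_int a + of_int b * t = of_int (4 * c) + of_int (4 * d) * t" by (simp add: algebra_simps)
  then show ?thesis using coeffs_unique by fastforce
qed

fun lift :: "f4 \<Rightarrow> real" where
  "lift F0 = 0" | "lift F1 = 1" | "lift Fw = t" | "lift Fw' = 1 - t"

lemma lift_in_ZT [simp, intro]: "lift f \<in> ZT"
  by (cases f) auto

lemma red_lift [simp]: "red (lift f) = f"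
  by (cases f) auto

lemma lift_sq: "lift f * lift f = of_int (sq_coeff0 f) + of_int (sq_coeff1 f) * t"
  by (cases f) (auto simp: t_sq algebra_simps)

lemma sq_mod_4:
  assumes "r \<in> ZT"
  obtains e where "e \<in> ZT" "r * r = of_int (sq_coeff0 (red r)) + of_int (sq_coeff1 (red r)) * t + 4 * e"
proof -
  define l where "l = lift (red r)"
  define e where "e = (r - l) / 2"
  have e: "e \<in> ZT"
    unfolding e_def l_def using half_in_ZT_iff[of "r - lift (red r)"] red_diff[OF assms lift_in_ZT] assms
    by auto
  have "r = l + 2 * e" unfolding e_def by (simp add: field_simps)
  then have "r * r = l * l + 4 * (l * e + e * e)" by (simp add: algebra_simps)
  with e show ?thesis using that[of "l * e + e * e"] lift_sq unfolding l_def by auto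
qed

definition Zvec :: "real^4 \<Rightarrow> bool" where
  "Zvec v \<longleftrightarrow> (\<forall>i. v $ i \<in> ZT)"

definition red_vec :: "real^4 \<Rightarrow> f4vec" where
  "red_vec v = (red (v$1), red (v$2), red (v$3), red (v$4))"

lemma nth4_red_vec [simp]: "nth4 (red_vec v) i = red (v $ i)"
  using exhaust_4[of i] by (auto simp: red_vec_def)

lemma red_vec_eq_iff: "red_vec v = red_vec w \<longleftrightarrow> (\<forall>i. red (v $ i) = red (w $ i))"
  unfolding red_vec_def forall_4 by auto

lemma red_vec_eq_0_iff: "red_vec v = 0 \<longleftrightarrow> (\<forall>i. red (v $ i) = 0)"
  unfolding red_vec_def forall_4 zero_f4vec by auto

lemma Zvec_add: "Zvec v \<Longrightarrow> Zvec w \<Longrightarrow> Zvec (v + w)"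
  and Zvec_diff: "Zvec v \<Longrightarrow> Zvec w \<Longrightarrow> Zvec (v - w)"
  and Zvec_scaleR: "c \<in> ZT \<Longrightarrow> Zvec v \<Longrightarrow> Zvec (c *\<^sub>R v)"
  and Zvec_permv: "Zvec v \<Longrightarrow> Zvec (permv p v)"
  unfolding Zvec_def by auto

lemma inner_in_ZT: "Zvec x \<Longrightarrow> Zvec y \<Longrightarrow> x \<bullet> y \<in> ZT"
  unfolding Zvec_def inner_4 by auto

lemma red_inner: "Zvec x \<Longrightarrow> Zvec y \<Longrightarrow> red (x \<bullet> y) = dot4 (red_vec x) (red_vec y)"
  unfolding Zvec_def inner_4 red_vec_def by (simp add: red_add red_mult)

lemma red_vec_add: "Zvec v \<Longrightarrow> Zvec w \<Longrightarrow> red_vec (v + w) = red_vec v + red_vec w"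
  unfolding Zvec_def red_vec_def by (simp add: red_add)

lemma red_vec_scaleR: "c \<in> ZT \<Longrightarrow> Zvec v \<Longrightarrow> red_vec (c *\<^sub>R v) = smult4 (red c) (red_vec v)"
  unfolding Zvec_def red_vec_def by (simp add: red_mult)

lemma red_vec_diff_scaleR:
  "Zvec v \<Longrightarrow> Zvec w \<Longrightarrow> c \<in> ZT \<Longrightarrow> red_vec (v - c *\<^sub>R w) = red_vec v + smult4 (red c) (red_vec w)"
  unfolding Zvec_def red_vec_def by (simp add: red_mult red_diff)

lemma red_vec_uminus: "Zvec v \<Longrightarrow> red_vec (- v) = red_vec v"
  unfolding Zvec_def red_vec_def by (simp add: red_uminus)

lemma red_vec_double: "Zvec v \<Longrightarrow> red_vec (2 *\<^sub>R v) = 0"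
  unfolding Zvec_def red_vec_def zero_f4vec by simp

lemma red_vec_permv: "red_vec (permv p v) = permute4 p (red_vec v)"
  unfolding permute4_def nth4_red_vec by (simp add: red_vec_def)

lemma Zvec_half: "Zvec v \<Longrightarrow> red_vec v = 0 \<Longrightarrow> Zvec ((1/2) *\<^sub>R v)"
  unfolding Zvec_def red_vec_eq_0_iff using half_in_ZT_iff by auto

lemma cong2_iff:
  assumes "Zvec y" "Zvec z"
  shows "cong2 y z \<longleftrightarrow> red_vec y = red_vec z"
proof -
  have "(y $ i - z $ i) / 2 \<in> ZT \<longleftrightarrow> red (y $ i) = red (z $ i)" for i
    using assms half_in_ZT_iff[of "y $ i - z $ i"] red_diff[of "y $ i" "z $ i"]
    unfolding Zvec_def by simp
  then show ?thesis unfolding cong2_def red_vec_eq_iff by simp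
qed

lemma cong2_0_iff: "Zvec y \<Longrightarrow> cong2 y 0 \<longleftrightarrow> red_vec y = 0"
  using cong2_iff[of y 0] by (simp add: Zvec_def red_vec_def zero_f4vec)

lemma red_in_iff: "Zvec y \<Longrightarrow> \<forall>v\<in>R. Zvec v \<Longrightarrow> red_in y R \<longleftrightarrow> red_vec y \<in> red_vec ` R"
  unfolding red_in_def by (auto simp: cong2_iff)

lemma red_in_nonzero_iff:
  "Zvec y \<Longrightarrow> \<forall>v\<in>R. Zvec v \<Longrightarrow> red_in_nonzero y R \<longleftrightarrow> red_vec y \<in> red_vec ` R - {0}"
  unfolding red_in_nonzero_def by (auto simp: cong2_iff cong2_0_iff)

lemma unitlat_iff: "unitlat n x \<longleftrightarrow> Zvec ((2 ^ n) *\<^sub>R x) \<and> x \<bullet> x = 1"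
  unfolding unitlat_def Zvec_def by simp

lemma F4reps_eq: "F4reps = range lift"
proof -
  have "range lift = lift ` {F0, F1, Fw, Fw'}"
    by (rule arg_cong[where f = "image lift"]) (use f4.exhaust in auto)
  then have "range lift = {0, 1, t, 1 - t}" by simp
  then show ?thesis unfolding F4reps_def using t_cases tau'_eq by auto
qed

definition g_signed :: "real \<Rightarrow> real \<Rightarrow> real \<Rightarrow> real^4" where
  "g_signed s1 s2 s3 = vector [0, s1, s2 * (1 - t), s3 * t]"

definition g :: "real^4" where "g = vector [0, 1, 1 - t, t]"

text \<open>The vectors \<open>2\<alpha>\<close> for \<open>\<alpha> \<in> Deltadot_t\<close> (lemma \<open>Deltadot_t_iff\<close>).\<close>

definition double_roots :: "(real^4) set" where
  "double_roots = {permv p (g_signed s1 s2 s3) | p s1 s2 s3.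
     p \<in> evenperms \<and> s1 \<in> {1, -1} \<and> s2 \<in> {1, -1} \<and> s3 \<in> {1, -1}}"

definition Deltadot_t :: "(real^4) set" where
  "Deltadot_t = DeltaP t (1 - t) - DeltaP (1 - t) t"

definition S_t :: "nat \<Rightarrow> (real^4) set" where
  "S_t n = {x. unitlat n x \<and> red_in_nonzero ((2 ^ n) *\<^sub>R x) (spanrep one4 g)}"

definition Sdot_t :: "nat \<Rightarrow> (real^4) set" where
  "Sdot_t n = {x. unitlat n x \<and> red_in ((2 ^ n) *\<^sub>R x) {permv p g | p. p \<in> evenperms}}"

definition Sdot'_t :: "nat \<Rightarrow> (real^4) set" where
  "Sdot'_t n = {x. unitlat n x \<and> red_in ((2 ^ n) *\<^sub>R x) {permv p g | p. p \<in> oddperms}}"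

lemma sign_in_ZT: "s \<in> {1, -1} \<Longrightarrow> s \<in> ZT \<and> red s = 1"
  using red_uminus[of 1] by auto

lemma Zvec_g_signed: "s1 \<in> {1, -1} \<Longrightarrow> s2 \<in> {1, -1} \<Longrightarrow> s3 \<in> {1, -1} \<Longrightarrow> Zvec (g_signed s1 s2 s3)"
  unfolding Zvec_def g_signed_def forall_4 using sign_in_ZT by auto

lemma red_vec_g_signed:
  "s1 \<in> {1, -1} \<Longrightarrow> s2 \<in> {1, -1} \<Longrightarrow> s3 \<in> {1, -1} \<Longrightarrow> red_vec (g_signed s1 s2 s3) = gbar"
  unfolding red_vec_def g_signed_def gbar_def using sign_in_ZT by (auto simp: red_mult)

lemma inner_g_signed:
  assumes "s1 \<in> {1, -1}" "s2 \<in> {1, -1}" "s3 \<in> {1, -1}"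
  shows "g_signed s1 s2 s3 \<bullet> g_signed s1 s2 s3 = 4"
proof -
  have "g_signed s1 s2 s3 \<bullet> g_signed s1 s2 s3
      = s1 * s1 + (s2 * s2) * ((1 - t) * (1 - t)) + (s3 * s3) * (t * t)"
    unfolding g_signed_def inner_4 by (simp add: algebra_simps)
  also have "\<dots> = 1 + (1 - t) * (1 - t) + t * t" using assms by auto
  also have "\<dots> = 4" using t_sq by (simp add: algebra_simps)
  finally show ?thesis .
qed

lemma g_eq: "g = g_signed 1 1 1"
  unfolding g_def g_signed_def by simp

lemma g_signed_uminus: "g_signed (- s1) (- s2) (- s3) = - g_signed s1 s2 s3"
  unfolding g_signed_def by (simp add: vec_eq_iff forall_4)

lemma double_rootsE:
  assumes "a \<in> double_roots"
  obtains p s1 s2 s3 where "a = permv p (g_signed s1 s2 s3)" "p \<in> evenperms"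
    "s1 \<in> {1, -1}" "s2 \<in> {1, -1}" "s3 \<in> {1, -1}"
  using assms unfolding double_roots_def by blast

lemma double_rootsI:
  "p \<in> evenperms \<Longrightarrow> s1 \<in> {1, -1} \<Longrightarrow> s2 \<in> {1, -1} \<Longrightarrow> s3 \<in> {1, -1} \<Longrightarrow>
    permv p (g_signed s1 s2 s3) \<in> double_roots"
  unfolding double_roots_def by blast

lemma double_root:
  assumes "a \<in> double_roots"
  shows "Zvec a" "red_vec a \<in> Adotbar" "a \<bullet> a = 4"
proof -
  obtain p s1 s2 s3 where a: "a = permv p (g_signed s1 s2 s3)" "p \<in> evenperms"
    "s1 \<in> {1, -1}" "s2 \<in> {1, -1}" "s3 \<in> {1, -1}" using double_rootsE[OF assms] .
  show "Zvec a" using a Zvec_g_signed Zvec_permv by simp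
  show "red_vec a \<in> Adotbar" unfolding Adotbar_def using a red_vec_g_signed red_vec_permv by auto
  have "p permutes UNIV" using a(2) by (simp add: evenperms_def)
  then show "a \<bullet> a = 4" using a by (simp add: permv_inner inner_g_signed)
qed

lemma half_double_root_unit: "a \<in> double_roots \<Longrightarrow> ((1/2) *\<^sub>R a) \<bullet> ((1/2) *\<^sub>R a) = 1"
  using double_root(3) by simp

lemma red_vec_twice_notin_Adotbar:
  assumes "\<beta> \<in> DeltaP (1 - t) t"
  shows "red_vec (2 *\<^sub>R \<beta>) \<notin> Adotbar"
  using assms unfolding DeltaP_def
proof (elim UnE CollectE exE conjE)
  fix i and s :: real
  assume "s = 1 \<or> s = -1" "\<beta> = (\<chi> j. if j = i then s else 0)"
  then have "red_vec (2 *\<^sub>R \<beta>) = 0"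
    unfolding red_vec_eq_0_iff using red_uminus[of 2] by auto
  then show ?thesis using zero_notin_Adotbar by simp
next
  assume h: "\<forall>j. \<beta> $ j = 1/2 \<or> \<beta> $ j = -1/2"
  have "(2 *\<^sub>R \<beta>) $ j = 1 \<or> (2 *\<^sub>R \<beta>) $ j = -1" for j using h[rule_format, of j] by auto
  then have "red_vec (2 *\<^sub>R \<beta>) = ones4" unfolding red_vec_def ones4_def using sign_in_ZT by auto
  then show ?thesis using ones4_notin_Adotbar by simp
next
  fix q s1 s2 s3
  assume \<beta>: "\<beta> = permv q ((1/2) *\<^sub>R vector [0, s1, s2 * t, s3 * (1 - t)])"
    and q: "q \<in> evenperms" and s: "s1 \<in> {1, -1}" "s2 \<in> {1, -1}" "s3 \<in> {1, -1}"
  have "red_vec (vector [0, s1, s2 * t, s3 * (1 - t)]) = gbar'"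
    unfolding red_vec_def gbar'_def using s sign_in_ZT by (auto simp: red_mult)
  then have "red_vec (2 *\<^sub>R \<beta>) = permute4 (tr 3 4 \<circ> q) gbar"
    unfolding \<beta> by (simp add: permv_scaleR red_vec_permv gbar'_eq permute4_permute4)
  moreover have "tr 3 4 \<circ> q \<in> oddperms"
    using q transpose_comp_evenperms(1)[of 3 4] by auto
  ultimately have "red_vec (2 *\<^sub>R \<beta>) \<in> Adotbar'" unfolding Adotbar'_def by blast
  then show ?thesis using Adotbar_Int_Adotbar' by blast
qed

lemma Deltadot_t_iff: "\<alpha> \<in> Deltadot_t \<longleftrightarrow> (\<exists>a\<in>double_roots. \<alpha> = (1/2) *\<^sub>R a)"
proof
  assume "\<alpha> \<in> Deltadot_t"
  then have in1: "\<alpha> \<in> DeltaP t (1 - t)" and nin: "\<alpha> \<notin> DeltaP (1 - t) t"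
    unfolding Deltadot_t_def by auto
  from nin have "\<not> ((\<exists>i s. (s = 1 \<or> s = -1) \<and> \<alpha> = (\<chi> j. if j = i then s else 0))
      \<or> (\<forall>j. \<alpha> $ j = 1/2 \<or> \<alpha> $ j = -1/2))"
    unfolding DeltaP_def by blast
  with in1 obtain p s1 s2 s3 where "\<alpha> = permv p ((1/2) *\<^sub>R vector [0, s1, s2 * (1 - t), s3 * t])"
    "p \<in> evenperms" "s1 \<in> {1, -1}" "s2 \<in> {1, -1}" "s3 \<in> {1, -1}"
    unfolding DeltaP_def by blast
  then show "\<exists>a\<in>double_roots. \<alpha> = (1/2) *\<^sub>R a"
    using double_rootsI by (auto simp: permv_scaleR g_signed_def)
next
  assume "\<exists>a\<in>double_roots. \<alpha> = (1/2) *\<^sub>R a"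
  then obtain a where a: "a \<in> double_roots" "\<alpha> = (1/2) *\<^sub>R a" by blast
  obtain p s1 s2 s3 where ps: "a = permv p (g_signed s1 s2 s3)" "p \<in> evenperms"
    "s1 \<in> {1, -1}" "s2 \<in> {1, -1}" "s3 \<in> {1, -1}" by (rule double_rootsE[OF a(1)])
  then have "\<alpha> = permv p ((1/2) *\<^sub>R vector [0, s1, s2 * (1 - t), s3 * t])"
    unfolding a(2) by (simp add: permv_scaleR g_signed_def)
  with ps(2-5) have "\<alpha> \<in> DeltaP t (1 - t)" unfolding DeltaP_def by blast
  moreover have "\<alpha> \<notin> DeltaP (1 - t) t"
    using red_vec_twice_notin_Adotbar[of \<alpha>] double_root(2)[OF a(1)] a(2) by auto
  ultimately show "\<alpha> \<in> Deltadot_t" unfolding Deltadot_t_def by blast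
qed

lemma red_vec_spanrep: "red_vec ` spanrep one4 g = Abar" "\<forall>v\<in>spanrep one4 g. Zvec v"
proof -
  have one4: "Zvec one4" "red_vec one4 = ones4"
    unfolding one4_def Zvec_def red_vec_def ones4_def by (simp_all add: forall_4)
  have g: "Zvec g" "red_vec g = gbar" unfolding g_eq by (simp_all add: Zvec_g_signed red_vec_g_signed)
  have span: "spanrep one4 g = {lift c *\<^sub>R one4 + lift d *\<^sub>R g | c d. True}"
    unfolding spanrep_def F4reps_eq by auto
  have Z: "Zvec (lift c *\<^sub>R one4 + lift d *\<^sub>R g)" for c d
    using one4 g by (auto intro: Zvec_add Zvec_scaleR)
  have red: "red_vec (lift c *\<^sub>R one4 + lift d *\<^sub>R g) = smult4 c ones4 + smult4 d gbar" for c d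
    using one4 g by (simp add: red_vec_add red_vec_scaleR Zvec_scaleR)
  show "\<forall>v\<in>spanrep one4 g. Zvec v" unfolding span using Z by auto
  show "red_vec ` spanrep one4 g = Abar"
  proof
    show "red_vec ` spanrep one4 g \<subseteq> Abar" unfolding span Abar_def using red by blast
    show "Abar \<subseteq> red_vec ` spanrep one4 g"
    proof
      fix f assume "f \<in> Abar"
      then obtain c d where "f = smult4 c ones4 + smult4 d gbar" unfolding Abar_def by blast
      then have "f = red_vec (lift c *\<^sub>R one4 + lift d *\<^sub>R g)" using red by simp
      then show "f \<in> red_vec ` spanrep one4 g" unfolding span by blast
    qed
  qed
qed

lemma red_vec_permv_g: "red_vec ` {permv p g | p. p \<in> P} = {permute4 p gbar | p. p \<in> P}"
  "\<forall>v\<in>{permv p g | p. p \<in> P}. Zvec v"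
  unfolding g_eq Setcompr_eq_image using red_vec_g_signed[of 1 1 1] Zvec_g_signed[of 1 1 1]
  by (auto simp: image_image red_vec_permv Zvec_permv)

lemma S_t_iff: "x \<in> S_t n \<longleftrightarrow>
    Zvec ((2 ^ n) *\<^sub>R x) \<and> x \<bullet> x = 1 \<and> red_vec ((2 ^ n) *\<^sub>R x) \<in> Abar - {0}"
  unfolding S_t_def unitlat_iff using red_in_nonzero_iff red_vec_spanrep by auto

lemma Sdot_t_iff: "x \<in> Sdot_t n \<longleftrightarrow>
    Zvec ((2 ^ n) *\<^sub>R x) \<and> x \<bullet> x = 1 \<and> red_vec ((2 ^ n) *\<^sub>R x) \<in> Adotbar"
  unfolding Sdot_t_def unitlat_iff Adotbar_def using red_in_iff red_vec_permv_g by auto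

lemma Sdot'_t_iff: "x \<in> Sdot'_t n \<longleftrightarrow>
    Zvec ((2 ^ n) *\<^sub>R x) \<and> x \<bullet> x = 1 \<and> red_vec ((2 ^ n) *\<^sub>R x) \<in> Adotbar'"
  unfolding Sdot'_t_def unitlat_iff Adotbar'_def using red_in_iff red_vec_permv_g by auto

section \<open>Reflecting \<open>S\<close>\<close>

lemma lattice_reflection:
  assumes "Zvec y" "red_vec y \<in> Abar" "a \<in> double_roots"
  shows "(y \<bullet> a) / 2 \<in> ZT" "Zvec (y - ((y \<bullet> a) / 2) *\<^sub>R a)"
    "red_vec (y - ((y \<bullet> a) / 2) *\<^sub>R a) = red_vec y + smult4 (red ((y \<bullet> a) / 2)) (red_vec a)"
    "red_vec (y - ((y \<bullet> a) / 2) *\<^sub>R a) \<in> Abar"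
proof -
  have a: "Zvec a" "red_vec a \<in> Adotbar" using double_root assms(3) by auto
  have "red (y \<bullet> a) = 0" using red_inner[OF assms(1) a(1)] dot4_Abar_Adotbar assms(2) a(2) by simp
  then show c: "(y \<bullet> a) / 2 \<in> ZT" using half_in_ZT_iff inner_in_ZT assms(1) a(1) by blast
  show "Zvec (y - ((y \<bullet> a) / 2) *\<^sub>R a)" using Zvec_diff Zvec_scaleR c a assms by auto
  show eq: "red_vec (y - ((y \<bullet> a) / 2) *\<^sub>R a) = red_vec y + smult4 (red ((y \<bullet> a) / 2)) (red_vec a)"
    using red_vec_diff_scaleR assms(1) a(1) c by blast
  show "red_vec (y - ((y \<bullet> a) / 2) *\<^sub>R a) \<in> Abar"
    unfolding eq using Abar_add_smult4_Adotbar assms(2) a(2) by blast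
qed

lemma red_vec_in_Abar_Un_Abar':
  assumes "Zvec w" "(w \<bullet> w) / 4 \<in> ZT"
  shows "red_vec w \<in> Abar \<union> Abar'"
proof -
  have "\<forall>i. \<exists>e. e \<in> ZT \<and>
      w $ i * w $ i = of_int (sq_coeff0 (red (w $ i))) + of_int (sq_coeff1 (red (w $ i))) * t + 4 * e"
    using assms(1) sq_mod_4 unfolding Zvec_def by metis
  then obtain e :: "4 \<Rightarrow> real" where e: "\<And>i. e i \<in> ZT" "\<And>i.
      w $ i * w $ i = of_int (sq_coeff0 (red (w $ i))) + of_int (sq_coeff1 (red (w $ i))) * t + 4 * e i"
    by metis
  define A where "A = sq_coeff0 (red (w$1)) + sq_coeff0 (red (w$2)) + sq_coeff0 (red (w$3)) + sq_coeff0 (red (w$4))"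
  define B where "B = sq_coeff1 (red (w$1)) + sq_coeff1 (red (w$2)) + sq_coeff1 (red (w$3)) + sq_coeff1 (red (w$4))"
  have "w \<bullet> w = of_int A + of_int B * t + 4 * (e 1 + e 2 + e 3 + e 4)"
    unfolding inner_4 e(2) A_def B_def by (simp add: algebra_simps)
  then have "(of_int A + of_int B * t) / 4 = (w \<bullet> w) / 4 - (e 1 + e 2 + e 3 + e 4)" by (simp add: field_simps)
  also have "\<dots> \<in> ZT" using assms(2) e(1) by auto
  finally have "4 dvd A \<and> 4 dvd B" by (rule quarter_in_ZT_imp_dvd)
  then show ?thesis unfolding red_vec_def A_def B_def using sq_coeffs_dvd4_imp_Abar_Un_Abar' by blast
qed

lemma reflect_S_t_nonzero:
  assumes "x \<in> S_t n" "a \<in> double_roots" "red_vec ((2 ^ n) *\<^sub>R reflect ((1/2) *\<^sub>R a) x) \<noteq> 0"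
  shows "reflect ((1/2) *\<^sub>R a) x \<in> S_t n"
proof -
  have y: "Zvec ((2 ^ n) *\<^sub>R x)" "x \<bullet> x = 1" "red_vec ((2 ^ n) *\<^sub>R x) \<in> Abar"
    using assms(1) unfolding S_t_iff by auto
  show ?thesis
    unfolding S_t_iff scaleR_reflect_half
    using lattice_reflection[OF y(1,3) assms(2)] assms(3) y(2) inner_reflect[OF half_double_root_unit[OF assms(2)]]
    unfolding scaleR_reflect_half by simp
qed

lemma reflect_S_t_zero:
  assumes "n \<ge> 2" "x \<in> S_t n" "a \<in> double_roots" "red_vec ((2 ^ n) *\<^sub>R reflect ((1/2) *\<^sub>R a) x) = 0"
  shows "reflect ((1/2) *\<^sub>R a) x \<in> Sdot'_t (n - 1)"
proof -
  define r where "r = reflect ((1/2) *\<^sub>R a) x"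
  obtain m where m: "n = m + 2" using assms(1) by (metis add.commute le_Suc_ex)
  have y: "Zvec ((2 ^ n) *\<^sub>R x)" "x \<bullet> x = 1" "red_vec ((2 ^ n) *\<^sub>R x) \<in> Abar - {0}"
    using assms(2) unfolding S_t_iff by auto
  have unit: "(1/2) *\<^sub>R a \<bullet> (1/2) *\<^sub>R a = 1" using half_double_root_unit[OF assms(3)] .
  have rr: "r \<bullet> r = 1" unfolding r_def using inner_reflect[OF unit] y(2) by simp
  define w where "w = (2 ^ (n - 1)) *\<^sub>R r"
  have "Zvec ((2 ^ n) *\<^sub>R r)"
    using lattice_reflection(2)[OF y(1) _ assms(3)] y(3) unfolding r_def scaleR_reflect_half by simp
  moreover have "(2 ^ n) *\<^sub>R r = 2 *\<^sub>R w" unfolding w_def m by simp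
  ultimately have wZ: "Zvec w" using Zvec_half[of "2 *\<^sub>R w"] assms(4) unfolding r_def by simp
  have "(w \<bullet> w) / 4 = 4 ^ m" unfolding w_def m using rr
    by (simp add: power_mult_distrib[symmetric] power_add)
  then have "(w \<bullet> w) / 4 \<in> ZT" by simp
  then have "red_vec w \<in> Abar \<union> Abar'" using red_vec_in_Abar_Un_Abar' wZ by blast
  moreover have "red_vec w \<notin> Abar" \<comment> \<open>else reflecting \<open>w\<close> back makes \<open>2^(n-1) x\<close> integral\<close>
  proof
    assume "red_vec w \<in> Abar"
    then have "Zvec (w - ((w \<bullet> a) / 2) *\<^sub>R a)" using lattice_reflection(2)[OF wZ _ assms(3)] by simp
    moreover have "w - ((w \<bullet> a) / 2) *\<^sub>R a = (2 ^ (n - 1)) *\<^sub>R x"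
      using scaleR_reflect_half[of "2 ^ (n - 1)" a r] reflect_reflect[OF unit, of x]
      unfolding w_def r_def by simp
    ultimately have half: "red_vec (2 *\<^sub>R ((2 ^ (n - 1)) *\<^sub>R x)) = 0" by (metis red_vec_double)
    have "(2 ^ n) *\<^sub>R x = 2 *\<^sub>R ((2 ^ (n - 1)) *\<^sub>R x)" unfolding m by simp
    then have "red_vec ((2 ^ n) *\<^sub>R x) = 0" by (simp only: half)
    then show False using y(3) by simp
  qed
  ultimately have "red_vec w \<in> Adotbar'" using Abar'_diff_Abar by blast
  then show ?thesis unfolding Sdot'_t_iff r_def[symmetric] using wZ rr w_def by simp
qed

lemma reflect_S_t:
  assumes "n \<ge> 2" "x \<in> S_t n" "\<alpha> \<in> Deltadot_t"
  shows "reflect \<alpha> x \<in> S_t n \<union> Sdot'_t (n - 1)"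
proof -
  obtain a where "a \<in> double_roots" "\<alpha> = (1/2) *\<^sub>R a" using assms(3) Deltadot_t_iff by blast
  then show ?thesis using assms(1,2) reflect_S_t_nonzero reflect_S_t_zero by blast
qed

lemma Sdot_t_subset: "Sdot_t n \<subseteq> S_t n"
  using Adotbar_subset_Abar zero_notin_Adotbar by (auto simp: S_t_iff Sdot_t_iff)

lemma reflect_S_t_diff_Sdot_t:
  assumes "x \<in> S_t n - Sdot_t n" "\<alpha> \<in> Deltadot_t"
  shows "reflect \<alpha> x \<in> S_t n"
proof -
  obtain a where a: "a \<in> double_roots" "\<alpha> = (1/2) *\<^sub>R a" using assms(2) Deltadot_t_iff by blast
  define y where "y = (2 ^ n) *\<^sub>R x"
  have y: "Zvec y" "red_vec y \<in> Abar" "red_vec y \<noteq> 0" "red_vec y \<notin> Adotbar"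
    using assms(1) by (auto simp: S_t_iff Sdot_t_iff y_def)
  have "red_vec (y - ((y \<bullet> a) / 2) *\<^sub>R a) \<noteq> 0"
    unfolding lattice_reflection(3)[OF y(1,2) a(1)]
    using Abar_add_smult4_Adotbar_nonzero y double_root(2)[OF a(1)] by blast
  then have "red_vec ((2 ^ n) *\<^sub>R reflect ((1/2) *\<^sub>R a) x) \<noteq> 0"
    unfolding scaleR_reflect_half y_def .
  then show ?thesis unfolding a(2) using reflect_S_t_nonzero[OF DiffD1[OF assms(1)] a(1)] by blast
qed

lemma g_signed_in_double_roots:
  "s1 \<in> {1, -1} \<Longrightarrow> s2 \<in> {1, -1} \<Longrightarrow> s3 \<in> {1, -1} \<Longrightarrow> g_signed s1 s2 s3 \<in> double_roots"
  using double_rootsI[of id] by (simp add: evenperms_def permutes_id permv_id)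

lemma ex_reflect_into_Sdot_t:
  assumes "x \<in> S_t n - Sdot_t n"
  shows "\<exists>\<alpha>\<in>Deltadot_t. reflect \<alpha> x \<in> Sdot_t n"
proof -
  define y where "y = (2 ^ n) *\<^sub>R x"
  have y: "Zvec y" "x \<bullet> x = 1" "red_vec y \<in> Abar" "red_vec y \<noteq> 0" "red_vec y \<notin> Adotbar"
    using assms by (auto simp: S_t_iff Sdot_t_iff y_def)
  have into: "reflect ((1/2) *\<^sub>R a) x \<in> Sdot_t n"
    if a: "a \<in> double_roots" "red_vec a = gbar" and c: "red ((y \<bullet> a) / 2) \<noteq> 0" for a
  proof -
    have "red_vec (y - ((y \<bullet> a) / 2) *\<^sub>R a) \<in> Adotbar"
      unfolding lattice_reflection(3)[OF y(1,3) a(1)] a(2)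
      using Abar_add_smult4_gbar y(3-5) c by blast
    moreover have "Zvec (y - ((y \<bullet> a) / 2) *\<^sub>R a)" using lattice_reflection(2)[OF y(1,3) a(1)] .
    moreover have "reflect ((1/2) *\<^sub>R a) x \<bullet> reflect ((1/2) *\<^sub>R a) x = 1"
      using inner_reflect[OF half_double_root_unit[OF a(1)]] y(2) by simp
    ultimately show ?thesis unfolding Sdot_t_iff scaleR_reflect_half y_def by simp
  qed
  define a0 a1 where "a0 = g_signed 1 1 1" and "a1 = g_signed (-1) 1 1"
  have a: "a0 \<in> double_roots" "a1 \<in> double_roots" "red_vec a0 = gbar" "red_vec a1 = gbar"
    unfolding a0_def a1_def by (simp_all add: g_signed_in_double_roots red_vec_g_signed)
  have c: "(y \<bullet> a1) / 2 \<in> ZT" "y $ 2 \<in> ZT"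
    using lattice_reflection(1)[OF y(1,3) a(2)] y(1) unfolding Zvec_def by auto
  have "(y \<bullet> a0) / 2 = (y \<bullet> a1) / 2 + y $ 2"
    unfolding a0_def a1_def g_signed_def inner_4 by (simp add: field_simps)
  then have "red ((y \<bullet> a0) / 2) = red ((y \<bullet> a1) / 2) + red (y $ 2)" by (simp only: red_add[OF c])
  moreover have "red (y $ 2) \<noteq> 0" using Abar_nth4_2_nonzero y(3-5) by fastforce
  ultimately have "red ((y \<bullet> a0) / 2) \<noteq> 0 \<or> red ((y \<bullet> a1) / 2) \<noteq> 0" by auto
  then show ?thesis using into a Deltadot_t_iff by blast
qed

lemma red_vec_diff_scaleR_eq_0_iff:
  "Zvec z \<Longrightarrow> Zvec u \<Longrightarrow> c \<in> ZT \<Longrightarrow> red_vec (z - c *\<^sub>R u) = 0 \<longleftrightarrow> red_vec z = smult4 (red c) (red_vec u)"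
  by (simp add: red_vec_diff_scaleR f4vec_add_eq_0_iff)

lemma sign_diff_half:
  assumes "s \<in> {1, -1}" "s' \<in> {1, -1}"
  shows "(s - s') / 2 \<in> ZT" "red ((s - s') / 2) = (if s = s' then 0 else 1)" "s \<noteq> s' \<Longrightarrow> s' = - s"
  using assms red_uminus[of 1] by auto

lemma g_signed_eq_or_uminus:
  assumes s: "s1 \<in> {1, -1}" "s2 \<in> {1, -1}" "s3 \<in> {1, -1}"
    and s': "s1' \<in> {1, -1}" "s2' \<in> {1, -1}" "s3' \<in> {1, -1}"
    and "red ((s1 - s1') / 2) = red ((s2 - s2') / 2)" "red ((s2 - s2') / 2) = red ((s3 - s3') / 2)"
  shows "g_signed s1' s2' s3' = g_signed s1 s2 s3 \<or> g_signed s1' s2' s3' = - g_signed s1 s2 s3"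
proof -
  have "(s1 = s1' \<and> s2 = s2' \<and> s3 = s3') \<or> (s1' = - s1 \<and> s2' = - s2 \<and> s3' = - s3)"
    using assms(7,8) sign_diff_half(2,3)[OF s(1) s'(1)] sign_diff_half(2,3)[OF s(2) s'(2)]
      sign_diff_half(2,3)[OF s(3) s'(3)]
    by (auto split: if_splits)
  then show ?thesis using g_signed_uminus by auto
qed

lemma g_signed_unique:
  assumes z: "Zvec z" "red_vec z \<noteq> 0"
    and s: "s1 \<in> {1, -1}" "s2 \<in> {1, -1}" "s3 \<in> {1, -1}"
    and s': "s1' \<in> {1, -1}" "s2' \<in> {1, -1}" "s3' \<in> {1, -1}"
    and c: "(z \<bullet> g_signed s1 s2 s3) / 2 \<in> ZT" "(z \<bullet> g_signed s1' s2' s3') / 2 \<in> ZT"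
    and k: "red_vec (z - ((z \<bullet> g_signed s1 s2 s3) / 2) *\<^sub>R g_signed s1 s2 s3) = 0"
      "red_vec (z - ((z \<bullet> g_signed s1' s2' s3') / 2) *\<^sub>R g_signed s1' s2' s3') = 0"
  shows "g_signed s1' s2' s3' = g_signed s1 s2 s3 \<or> g_signed s1' s2' s3' = - g_signed s1 s2 s3"
proof -
  define c c' where "c = (z \<bullet> g_signed s1 s2 s3) / 2" and "c' = (z \<bullet> g_signed s1' s2' s3') / 2"
  have rz: "red_vec z = smult4 (red c) gbar" "red_vec z = smult4 (red c') gbar"
    using k red_vec_diff_scaleR_eq_0_iff z(1) Zvec_g_signed red_vec_g_signed s s' c
    unfolding c_def c'_def by auto
  then have "red (z $ m) = red c * nth4 gbar m" for m by (metis nth4_red_vec nth4_smult4)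
  then have zc: "red (z $ 2) = red c" "red (z $ 3) = red c * Fw'" "red (z $ 4) = red c * Fw"
    by (simp_all add: gbar_def f4_mult_F1)
  have cc': "red c = red c'" using arg_cong[OF rz(1), of "\<lambda>f. nth4 f 2"] rz(2) by (simp add: gbar_def)
  have l: "red c \<noteq> 0" using z(2) rz(1) by (auto simp: gbar_def zero_f4vec)
  define d1 d2 d3 where "d1 = (s1 - s1') / 2" and "d2 = (s2 - s2') / 2" and "d3 = (s3 - s3') / 2"
  have dZ: "d1 \<in> ZT" "d2 \<in> ZT" "d3 \<in> ZT" "red d1 \<in> {0, 1}" "red d2 \<in> {0, 1}" "red d3 \<in> {0, 1}"
    unfolding d1_def d2_def d3_def using sign_diff_half(1,2) s s' by auto
  have zZ: "z $ 2 \<in> ZT" "z $ 3 \<in> ZT" "z $ 4 \<in> ZT" using z(1) unfolding Zvec_def by blast+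
  \<comment> \<open>flipping the signs of a set of coordinates changes \<open>c\<close> by a sum that is even only
    for no flips or all flips\<close>
  have "c - c' = z $ 2 * d1 + z $ 3 * ((1 - t) * d2) + z $ 4 * (t * d3)"
    unfolding c_def c'_def d1_def d2_def d3_def g_signed_def inner_4 by (simp add: field_simps)
  then have "red (c - c') = red (z $ 2) * red d1 + red (z $ 3) * (Fw' * red d2) + red (z $ 4) * (Fw * red d3)"
    using dZ zZ by (simp add: red_add red_mult)
  moreover have "red (c - c') = 0" using cc' c unfolding c_def c'_def by (simp add: red_diff)
  ultimately have "red c * red d1 + (red c * Fw') * (Fw' * red d2) + (red c * Fw) * (Fw * red d3) = 0"
    unfolding zc by metis
  then have "red d1 = red d2 \<and> red d2 = red d3" using f4_sign_flip_cancel[OF l] dZ(4-6) by blast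
  then show ?thesis using g_signed_eq_or_uminus[OF s s'] unfolding d1_def d2_def d3_def by blast
qed

lemma g_signed_exists:
  assumes z: "Zvec z" and l: "l \<noteq> 0" and rz: "red_vec z = smult4 l gbar"
  shows "\<exists>s1 s2 s3. s1 \<in> {1, -1} \<and> s2 \<in> {1, -1} \<and> s3 \<in> {1, -1} \<and>
    (z \<bullet> g_signed s1 s2 s3) / 2 \<in> ZT \<and>
    red_vec (z - ((z \<bullet> g_signed s1 s2 s3) / 2) *\<^sub>R g_signed s1 s2 s3) = 0"
proof -
  have ex: ?thesis if s: "s1 \<in> {1, -1}" "s2 \<in> {1, -1}" "s3 \<in> {1, -1}"
    and c: "(z \<bullet> g_signed s1 s2 s3) / 2 \<in> ZT" "red ((z \<bullet> g_signed s1 s2 s3) / 2) = l" for s1 s2 s3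
  proof -
    have "red_vec (z - ((z \<bullet> g_signed s1 s2 s3) / 2) *\<^sub>R g_signed s1 s2 s3) = 0"
      unfolding red_vec_diff_scaleR_eq_0_iff[OF z Zvec_g_signed[OF s] c(1)]
      unfolding c(2) red_vec_g_signed[OF s] by (rule rz)
    then show ?thesis using s c(1) by blast
  qed
  define c0 where "c0 = (z \<bullet> g_signed 1 1 1) / 2"
  have "red (z \<bullet> g_signed 1 1 1) = dot4 (smult4 l gbar) gbar"
    using red_inner[OF z Zvec_g_signed[of 1 1 1]] red_vec_g_signed[of 1 1 1] rz by simp
  also have "\<dots> = 0" by (cases l) (simp_all add: gbar_def)
  finally have c0: "c0 \<in> ZT"
    unfolding c0_def using half_in_ZT_iff inner_in_ZT[OF z Zvec_g_signed[of 1 1 1]] by simp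
  have zZ: "z $ 2 \<in> ZT" "z $ 3 \<in> ZT" "z $ 4 \<in> ZT" using z unfolding Zvec_def by blast+
  have "red (z $ i) = l * nth4 gbar i" for i using rz by (metis nth4_red_vec nth4_smult4)
  then have rz_nth: "red (z $ 2) = l" "red (z $ 3) = l * Fw'" "red (z $ 4) = l * Fw"
    by (simp_all add: gbar_def f4_mult_F1)
  have flip: "(z \<bullet> g_signed (-1) 1 1) / 2 = c0 - z $ 2"
    "(z \<bullet> g_signed 1 (-1) 1) / 2 = c0 - (1 - t) * z $ 3"
    "(z \<bullet> g_signed 1 1 (-1)) / 2 = c0 - t * z $ 4"
    unfolding c0_def g_signed_def inner_4 by (simp_all add: field_simps)
  consider "red c0 = l" | "red c0 + l = l" | "red c0 + Fw' * (l * Fw') = l" | "red c0 + Fw * (l * Fw) = l"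
    using f4_translate_cover[OF l] by blast
  then show ?thesis
  proof cases
    case 1
    show ?thesis by (rule ex[of 1 1 1]) (use 1 c0 in \<open>simp_all add: c0_def[symmetric]\<close>)
  next
    case 2
    show ?thesis by (rule ex[of "-1" 1 1]) (use 2 c0 zZ rz_nth in \<open>simp_all add: flip red_diff\<close>)
  next
    case 3
    show ?thesis
      by (rule ex[of 1 "-1" 1]) (use 3 c0 zZ rz_nth in \<open>simp_all add: flip red_diff red_mult\<close>)
  next
    case 4
    show ?thesis
      by (rule ex[of 1 1 "-1"]) (use 4 c0 zZ rz_nth in \<open>simp_all add: flip red_diff red_mult\<close>)
  qed
qed

lemma double_root_unique:
  assumes y: "Zvec y" "red_vec y \<in> Abar - {0}" and a: "a \<in> double_roots" and b: "b \<in> double_roots"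
    and ab: "red_vec a = red_vec b"
    and ka: "red_vec (y - ((y \<bullet> a) / 2) *\<^sub>R a) = 0" and kb: "red_vec (y - ((y \<bullet> b) / 2) *\<^sub>R b) = 0"
  shows "b = a \<or> b = - a"
proof -
  obtain p s1 s2 s3 where ap: "a = permv p (g_signed s1 s2 s3)" "p \<in> evenperms"
    and s: "s1 \<in> {1, -1}" "s2 \<in> {1, -1}" "s3 \<in> {1, -1}" using double_rootsE[OF a] .
  obtain q s1' s2' s3' where bq: "b = permv q (g_signed s1' s2' s3')" "q \<in> evenperms"
    and s': "s1' \<in> {1, -1}" "s2' \<in> {1, -1}" "s3' \<in> {1, -1}" using double_rootsE[OF b] .
  have p: "p permutes UNIV" using ap(2) by (simp add: evenperms_def)
  have "permute4 p gbar = permute4 q gbar"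
    using ab unfolding ap(1) bq(1) red_vec_permv red_vec_g_signed[OF s] red_vec_g_signed[OF s'] .
  then have qp: "q = p" by (rule permute4_gbar_inj[symmetric])
  define z where "z = permv (inv p) y"
  have zZ: "Zvec z" unfolding z_def using Zvec_permv y(1) by blast
  have "red_vec y = permute4 p (red_vec z)" unfolding z_def red_vec_permv[symmetric] permv_inv[OF p] ..
  then have z0: "red_vec z \<noteq> 0" using y(2) permute4_eq_0_iff[OF p] by auto
  have inner: "y \<bullet> permv p u = z \<bullet> u" for u unfolding z_def by (rule inner_permv_right[OF p])
  have kill: "red_vec (z - ((z \<bullet> u) / 2) *\<^sub>R u) = 0" if "red_vec (y - ((y \<bullet> permv p u) / 2) *\<^sub>R permv p u) = 0" for u
    using that unfolding diff_scaleR_permv[OF p] red_vec_permv permute4_eq_0_iff[OF p] inner z_def .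
  have c: "(z \<bullet> g_signed s1 s2 s3) / 2 \<in> ZT" "(z \<bullet> g_signed s1' s2' s3') / 2 \<in> ZT"
    using lattice_reflection(1)[OF y(1) _ a] lattice_reflection(1)[OF y(1) _ b] y(2)
    unfolding ap(1) bq(1) qp inner by auto
  have "g_signed s1' s2' s3' = g_signed s1 s2 s3 \<or> g_signed s1' s2' s3' = - g_signed s1 s2 s3"
    using g_signed_unique[OF zZ z0 s s' c] kill ka kb unfolding ap(1) bq(1) qp by blast
  then show ?thesis unfolding ap(1) bq(1) qp by (auto simp: permv_uminus)
qed

lemma double_root_exists:
  assumes y: "Zvec y" "red_vec y \<in> Adotbar" and m: "m \<noteq> 0"
  shows "\<exists>a\<in>double_roots. red_vec a = smult4 m (red_vec y) \<and> red_vec (y - ((y \<bullet> a) / 2) *\<^sub>R a) = 0"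
proof -
  have "smult4 m (red_vec y) \<in> Adotbar" using smult4_Adotbar y(2) m by blast
  then obtain p where p: "p \<in> evenperms" "permute4 p gbar = smult4 m (red_vec y)"
    unfolding Adotbar_def by force
  have pp: "p permutes UNIV" using p(1) by (simp add: evenperms_def)
  define l where "l = inverse m"
  have l: "l \<noteq> 0" "l * m = 1" unfolding l_def using m by (cases m; simp)+
  have "red_vec y = smult4 l (permute4 p gbar)" unfolding p(2) smult4_smult4 l(2) smult4_1 ..
  then have ry: "red_vec y = permute4 p (smult4 l gbar)" by (simp add: smult4_permute4)
  define z where "z = permv (inv p) y"
  have zZ: "Zvec z" unfolding z_def using Zvec_permv y(1) by blast
  have "red_vec z = smult4 l gbar"
    unfolding z_def red_vec_permv ry permute4_permute4 permutes_inv_o(1)[OF pp] permute4_id ..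
  then obtain s1 s2 s3 where s: "s1 \<in> {1, -1}" "s2 \<in> {1, -1}" "s3 \<in> {1, -1}"
    and k: "red_vec (z - ((z \<bullet> g_signed s1 s2 s3) / 2) *\<^sub>R g_signed s1 s2 s3) = 0"
    using g_signed_exists[OF zZ l(1)] by blast
  define a where "a = permv p (g_signed s1 s2 s3)"
  have "a \<in> double_roots" unfolding a_def using double_rootsI p(1) s by blast
  moreover have "red_vec a = smult4 m (red_vec y)"
    unfolding a_def red_vec_permv red_vec_g_signed[OF s] p(2) ..
  moreover have "y \<bullet> a = z \<bullet> g_signed s1 s2 s3" unfolding a_def z_def by (rule inner_permv_right[OF pp])
  then have "red_vec (y - ((y \<bullet> a) / 2) *\<^sub>R a) = 0"
    using k unfolding a_def diff_scaleR_permv[OF pp] red_vec_permv permute4_eq_0_iff[OF pp] z_def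
    by simp
  ultimately show ?thesis by blast
qed

lemma reflect_in_Sdot'_t_iff:
  assumes "n \<ge> 2" "x \<in> Sdot_t n" "a \<in> double_roots"
  shows "reflect ((1/2) *\<^sub>R a) x \<in> Sdot'_t (n - 1) \<longleftrightarrow> red_vec ((2 ^ n) *\<^sub>R reflect ((1/2) *\<^sub>R a) x) = 0"
proof
  assume "reflect ((1/2) *\<^sub>R a) x \<in> Sdot'_t (n - 1)"
  then have "Zvec ((2 ^ (n - 1)) *\<^sub>R reflect ((1/2) *\<^sub>R a) x)" unfolding Sdot'_t_iff by blast
  moreover have "(2 ^ n) *\<^sub>R reflect ((1/2) *\<^sub>R a) x = 2 *\<^sub>R ((2 ^ (n - 1)) *\<^sub>R reflect ((1/2) *\<^sub>R a) x)"
    using assms(1) by (cases n) simp_all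
  ultimately show "red_vec ((2 ^ n) *\<^sub>R reflect ((1/2) *\<^sub>R a) x) = 0" by (metis red_vec_double)
next
  assume "red_vec ((2 ^ n) *\<^sub>R reflect ((1/2) *\<^sub>R a) x) = 0"
  then show "reflect ((1/2) *\<^sub>R a) x \<in> Sdot'_t (n - 1)"
    using reflect_S_t_zero assms Sdot_t_subset by blast
qed

lemma reflect_half_eq_imp_red_vec_eq:
  assumes "a \<in> double_roots" "b \<in> double_roots" "reflect ((1/2) *\<^sub>R a) = reflect ((1/2) *\<^sub>R b)"
  shows "red_vec a = red_vec b"
proof -
  have "(1/2) *\<^sub>R b = (1/2) *\<^sub>R a \<or> (1/2) *\<^sub>R b = - ((1/2) *\<^sub>R a)"
    using reflect_eq_reflect_imp[OF half_double_root_unit[OF assms(1)] half_double_root_unit[OF assms(2)] assms(3)] .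
  then have "(1/2) *\<^sub>R b = (1/2) *\<^sub>R a \<or> (1/2) *\<^sub>R b = (1/2) *\<^sub>R (- a)" by simp
  then have "b = a \<or> b = - a" by (metis scaleR_cancel_left zero_neq_numeral divide_eq_0_iff one_neq_zero)
  then show ?thesis using red_vec_uminus double_root(1)[OF assms(1)] by auto
qed

lemma killing_root_residue:
  assumes y: "Zvec y" "red_vec y \<in> Adotbar" and a: "a \<in> double_roots"
    and k: "red_vec (y - ((y \<bullet> a) / 2) *\<^sub>R a) = 0"
  shows "red_vec a \<in> {red_vec y, smult4 Fw (red_vec y), smult4 Fw' (red_vec y)}"
proof -
  have "red_vec y + smult4 (red ((y \<bullet> a) / 2)) (red_vec a) = 0"
    using lattice_reflection(3)[OF y(1) _ a] y(2) Adotbar_subset_Abar k by auto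
  then show ?thesis using Adotbar_add_smult4_eq_0 y(2) double_root(2)[OF a] by blast
qed

lemma card_reflections_into_Sdot'_t:
  assumes n: "n \<ge> 2" and x: "x \<in> Sdot_t n"
  shows "card {reflect \<alpha> | \<alpha>. \<alpha> \<in> Deltadot_t \<and> reflect \<alpha> x \<in> Sdot'_t (n - 1)} = 3"
proof -
  define y where "y = (2 ^ n) *\<^sub>R x"
  have y: "Zvec y" "red_vec y \<in> Adotbar" using x by (auto simp: Sdot_t_iff y_def)
  then have yA: "red_vec y \<in> Abar - {0}" using Adotbar_subset_Abar zero_notin_Adotbar by auto
  define Q where "Q a \<longleftrightarrow> red_vec (y - ((y \<bullet> a) / 2) *\<^sub>R a) = 0" for a
  have Q_iff: "(1/2) *\<^sub>R a \<in> Deltadot_t \<and> reflect ((1/2) *\<^sub>R a) x \<in> Sdot'_t (n - 1) \<longleftrightarrow> Q a"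
    if "a \<in> double_roots" for a
    using Deltadot_t_iff that reflect_in_Sdot'_t_iff[OF n x that]
    unfolding Q_def scaleR_reflect_half y_def by blast
  have root: "\<exists>a\<in>double_roots. red_vec a = smult4 m (red_vec y) \<and> Q a" if "m \<noteq> 0" for m
    using double_root_exists[OF y that] unfolding Q_def .
  have "Fw \<noteq> 0" "Fw' \<noteq> 0" by simp_all
  then obtain a1 a2 a3 where a: "a1 \<in> double_roots" "a2 \<in> double_roots" "a3 \<in> double_roots"
    and ra: "red_vec a1 = smult4 1 (red_vec y)" "red_vec a2 = smult4 Fw (red_vec y)"
      "red_vec a3 = smult4 Fw' (red_vec y)"
    and Qa: "Q a1" "Q a2" "Q a3"
    using root[OF one_neq_zero] root[of Fw] root[of Fw'] by metis
  have same: "reflect ((1/2) *\<^sub>R b) = reflect ((1/2) *\<^sub>R a)"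
    if "a \<in> double_roots" "b \<in> double_roots" "Q a" "Q b" "red_vec a = red_vec b" for a b
  proof -
    have "b = a \<or> b = - a" using double_root_unique[OF y(1) yA that(1,2,5)] that(3,4) unfolding Q_def .
    then show ?thesis using reflect_uminus[of "(1/2) *\<^sub>R a"] by auto
  qed
  have "{reflect \<alpha> | \<alpha>. \<alpha> \<in> Deltadot_t \<and> reflect \<alpha> x \<in> Sdot'_t (n - 1)} =
      {reflect ((1/2) *\<^sub>R a1), reflect ((1/2) *\<^sub>R a2), reflect ((1/2) *\<^sub>R a3)}" (is "?R = ?T")
  proof
    show "?R \<subseteq> ?T"
    proof
      fix r assume "r \<in> ?R"
      then obtain \<alpha> where \<alpha>: "\<alpha> \<in> Deltadot_t" "reflect \<alpha> x \<in> Sdot'_t (n - 1)" "r = reflect \<alpha>" by blast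
      then obtain b where b: "b \<in> double_roots" "\<alpha> = (1/2) *\<^sub>R b" using Deltadot_t_iff by blast
      then have Qb: "Q b" using Q_iff \<alpha> by blast
      then have "red_vec b \<in> {red_vec y, smult4 Fw (red_vec y), smult4 Fw' (red_vec y)}"
        using killing_root_residue[OF y b(1)] unfolding Q_def by blast
      then have "red_vec a1 = red_vec b \<or> red_vec a2 = red_vec b \<or> red_vec a3 = red_vec b"
        unfolding ra smult4_1 by force
      then have "r = reflect ((1/2) *\<^sub>R a1) \<or> r = reflect ((1/2) *\<^sub>R a2) \<or> r = reflect ((1/2) *\<^sub>R a3)"
        using same[OF a(1) b(1) Qa(1) Qb] same[OF a(2) b(1) Qa(2) Qb] same[OF a(3) b(1) Qa(3) Qb]
        unfolding \<alpha>(3) b(2) by blast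
      then show "r \<in> ?T" by blast
    qed
    show "?T \<subseteq> ?R" using Q_iff a Qa by blast
  qed
  moreover have "distinct [red_vec a1, red_vec a2, red_vec a3]"
    unfolding ra smult4_1 using smult4_Adotbar_distinct y(2) by blast
  then have "distinct [reflect ((1/2) *\<^sub>R a1), reflect ((1/2) *\<^sub>R a2), reflect ((1/2) *\<^sub>R a3)]"
    using reflect_half_eq_imp_red_vec_eq a by (metis distinct_length_2_or_more distinct_singleton)
  ultimately show ?thesis using distinct_card by fastforce
qed

lemma reflection_properties:
  assumes "n \<ge> 2"
  shows "(\<forall>\<alpha>\<in>Deltadot_t. reflect \<alpha> ` S_t n \<subseteq> S_t n \<union> Sdot'_t (n - 1))
       \<and> (\<forall>\<alpha>\<in>Deltadot_t. reflect \<alpha> ` (S_t n - Sdot_t n) \<subseteq> S_t n)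
       \<and> (\<forall>x\<in>S_t n - Sdot_t n. \<exists>\<alpha>\<in>Deltadot_t. reflect \<alpha> x \<in> Sdot_t n)
       \<and> (\<forall>x\<in>Sdot_t n. card {reflect \<alpha> | \<alpha>. \<alpha> \<in> Deltadot_t \<and> reflect \<alpha> x \<in> Sdot'_t (n - 1)} = 3)"
  using reflect_S_t[OF assms] reflect_S_t_diff_Sdot_t ex_reflect_into_Sdot_t
    card_reflections_into_Sdot'_t[OF assms] by blast

end

interpretation Tau: golden tau
  by unfold_locales simp

interpretation Tau': golden tau'
  by unfold_locales simp

lemma permv_transpose_perms:
  "{permv p (permv (tr 3 4) v) | p. p \<in> evenperms} = {permv q v | q. q \<in> oddperms}"
  "{permv p (permv (tr 3 4) v) | p. p \<in> oddperms} = {permv q v | q. q \<in> evenperms}"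
proof -
  have "{permv p (permv (tr 3 4) v) | p. p \<in> P} = (\<lambda>q. permv q v) ` ((\<circ>) (tr 3 4) ` P)" for P
    by (auto simp: permv_permv)
  moreover have "(3::4) \<noteq> 4" by simp
  ultimately show "{permv p (permv (tr 3 4) v) | p. p \<in> evenperms} = {permv q v | q. q \<in> oddperms}"
    "{permv p (permv (tr 3 4) v) | p. p \<in> oddperms} = {permv q v | q. q \<in> evenperms}"
    by (simp_all add: transpose_comp_evenperms Setcompr_eq_image)
qed

lemma Tau_sets: "Tau.S_t = S" "Tau.Sdot_t = Sdot" "Tau.Sdot'_t = Sdot'" "Tau.Deltadot_t = Deltadot"
proof -
  have g: "Tau.g = vector [0, 1, tau', tau]" unfolding Tau.g_def tau'_eq ..
  show "Tau.S_t = S" "Tau.Sdot_t = Sdot" "Tau.Sdot'_t = Sdot'"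
    unfolding Tau.S_t_def S_def Tau.Sdot_t_def Sdot_def Tau.Sdot'_t_def Sdot'_def Arep_def Adotrep_def
      Adotrep'_def g by simp_all
  show "Tau.Deltadot_t = Deltadot"
    unfolding Tau.Deltadot_t_def Deltadot_def Kset_def Delta_def Delta'_def tau'_eq by auto
qed

lemma Tau'_sets: "Tau'.S_t = S'" "Tau'.Sdot_t = Sdot'" "Tau'.Sdot'_t = Sdot" "Tau'.Deltadot_t = Deltadot'"
proof -
  have tau: "1 - tau' = tau" unfolding tau'_eq by simp
  have g: "Tau'.g = vector [0, 1, tau, tau']" unfolding Tau'.g_def tau ..
  have g_swap: "Tau'.g = permv (tr 3 4) (vector [0, 1, tau', tau])"
    unfolding g by (simp add: vec_eq_iff forall_4 Transposition.transpose_def)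
  show "Tau'.S_t = S'" unfolding Tau'.S_t_def S'_def Arep'_def g by simp
  show "Tau'.Sdot_t = Sdot'" "Tau'.Sdot'_t = Sdot"
    unfolding Tau'.Sdot_t_def Sdot'_def Tau'.Sdot'_t_def Sdot_def Adotrep_def Adotrep'_def g_swap
      permv_transpose_perms by simp_all
  show "Tau'.Deltadot_t = Deltadot'"
    unfolding Tau'.Deltadot_t_def Deltadot'_def Kset_def Delta_def Delta'_def tau by auto
qed

theorem mainTheorem5:
  fixes n :: nat
  assumes "n \<ge> 2"
  shows "(\<forall>\<alpha>\<in>Deltadot. reflect \<alpha> ` S n \<subseteq> S n \<union> Sdot' (n - 1))
       \<and> (\<forall>\<alpha>\<in>Deltadot. reflect \<alpha> ` (S n - Sdot n) \<subseteq> S n)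
       \<and> (\<forall>x\<in>S n - Sdot n. \<exists>\<alpha>\<in>Deltadot. reflect \<alpha> x \<in> Sdot n)
       \<and> (\<forall>x\<in>Sdot n. card {reflect \<alpha> | \<alpha>. \<alpha> \<in> Deltadot \<and> reflect \<alpha> x \<in> Sdot' (n - 1)} = 3)
       \<and> (\<forall>\<alpha>\<in>Deltadot'. reflect \<alpha> ` S' n \<subseteq> S' n \<union> Sdot (n - 1))
       \<and> (\<forall>\<alpha>\<in>Deltadot'. reflect \<alpha> ` (S' n - Sdot' n) \<subseteq> S' n)
       \<and> (\<forall>x\<in>S' n - Sdot' n. \<exists>\<alpha>\<in>Deltadot'. reflect \<alpha> x \<in> Sdot' n)
       \<and> (\<forall>x\<in>Sdot' n. card {reflect \<alpha> | \<alpha>. \<alpha> \<in> Deltadot' \<and> reflect \<alpha> x \<in> Sdot (n - 1)} = 3)"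
  using conjI[OF Tau.reflection_properties[OF assms, unfolded Tau_sets]
      Tau'.reflection_properties[OF assms, unfolded Tau'_sets]]
  unfolding conj_assoc .

end
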